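(* Let $d,N_0\in\mathbb{N}$, $B>0$, $a\ge0$, and let $\varrho_a:\mathbb{R}\to\mathbb{R}$, $x\mapsto\max\{x,ax\}$ be the parametric ReLU. Then $\mathcal{RNN}_{\varrho_a}^{[-B,B]^d}((d,N_0,1))$ is closed in $C([-B,B]^d)$ (with the supremum norm).
   Context: $\mathcal{RNN}_{\varrho_a}^{[-B,B]^d}((d,N_0,1))$ is the set of all functions $[-B,B]^d\to\mathbb{R}$ of the form $x\mapsto A_2\varrho_a(A_1x+b_1)+b_2$ with $A_1\in\mathbb{R}^{N_0\times d}$, $b_1\in\mathbb{R}^{N_0}$, $A_2\in\mathbb{R}^{1\times N_0}$, $b_2\in\mathbb{R}$, where $\varrho_a$ acts componentwise. *)

theory Defs
  imports "HOL-Analysis.Analysis"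
begin

definition pReLU :: "real \<Rightarrow> real \<Rightarrow> real" where
  "pReLU a x = max x (a * x)"

text \<open>The cube [-B,B]^d, with the dimension d given by the finite index type 'd.\<close>
definition cube :: "real \<Rightarrow> (real ^ 'd) set" where
  "cube B = {x. \<forall>i. - B \<le> x $ i \<and> x $ i \<le> B}"

text \<open>Shallow networks with architecture (d, N0, 1) restricted to the cube:
  functions that agree on the cube with x \<mapsto> A2 rho_a(A1 x + b1) + b2.\<close>
definition RNN_shallow :: "real \<Rightarrow> nat \<Rightarrow> real \<Rightarrow> ((real ^ 'd) \<Rightarrow> real) set" where
  "RNN_shallow a N0 B =
     {f. \<exists>(A1 :: nat \<Rightarrow> real ^ 'd) (b1 :: nat \<Rightarrow> real) (A2 :: nat \<Rightarrow> real) (b2 :: real).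
          \<forall>x \<in> cube B. f x = (\<Sum>j<N0. A2 j * pReLU a (A1 j \<bullet> x + b1 j)) + b2}"

end

(* Write every hidden neuron as c * pReLU_a (u . x + v) with |(u, v)| = 1 and pass to a subsequence
   along which (u, v) converges to some (U, V).  For a = 1 all networks are affine, hence so is the
   limit g.  Otherwise pReLU_a = min 1 a * id + |1 - a| * relu, so along a segment whose endpoints lie
   on no limit hyperplane U . x + V = 0 the networks are eventually piecewise linear with kinks
   converging to those of g; continuity of g forces the total outer weight of each group of neurons
   sharing a limit kink to converge.  Applied to short segments through a point that lies on a single
   limit hyperplane, this shows that the signed outer weights of each class of neurons with a common
   limit hyperplane converge, so that g minus the resulting combination of relus is affine on generic
   segments, hence on the whole cube.  The affine part is realized by a spare neuron, which exists
   unless all limit hyperplanes cross the cube and are pairwise distinct; in that case the outer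
   weights themselves converge and g is the limit network. *)

theory Submission
  imports Defs
begin

definition relu :: "real \<Rightarrow> real" where
  "relu x = max 0 x"

lemma pReLU_eq_linear_plus_relu:
  assumes "a \<ge> 0"
  shows "pReLU a y = min 1 a * y + \<bar>1 - a\<bar> * relu y"
proof (cases "a \<le> 1")
  case True
  show ?thesis
  proof (cases "y \<ge> 0")
    case True
    have "a * y \<le> 1 * y" using \<open>a \<le> 1\<close> True by (intro mult_right_mono) auto
    then show ?thesis using True \<open>a \<le> 1\<close> unfolding pReLU_def relu_def by (simp add: algebra_simps)
  next
    case False
    have "1 * y \<le> a * y" using \<open>a \<le> 1\<close> False by (intro mult_right_mono_neg) auto
    then show ?thesis using False \<open>a \<le> 1\<close> unfolding pReLU_def relu_def by (simp add: algebra_simps)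
  qed
next
  case False
  show ?thesis
  proof (cases "y \<ge> 0")
    case True
    have "1 * y \<le> a * y" using False True by (intro mult_right_mono) auto
    then show ?thesis using True False unfolding pReLU_def relu_def by (simp add: algebra_simps)
  next
    case y: False
    have "a * y \<le> 1 * y" using False y by (intro mult_right_mono_neg) auto
    then show ?thesis using False y unfolding pReLU_def relu_def by (simp add: algebra_simps)
  qed
qed

lemma pReLU_mult_nonneg: "t \<ge> 0 \<Longrightarrow> pReLU a (t * y) = t * pReLU a y"
  unfolding pReLU_def by (simp add: max_mult_distrib_left algebra_simps)

lemma pReLU_0 [simp]: "pReLU a 0 = 0"
  by (simp add: pReLU_def)

lemma pReLU_1 [simp]: "pReLU 1 y = y"
  by (simp add: pReLU_def)

lemma pReLU_of_nonneg: "a \<ge> 0 \<Longrightarrow> y \<ge> 0 \<Longrightarrow> pReLU a y = max 1 a * y"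
  unfolding pReLU_def by (metis max_mult_distrib_right mult_1)

lemma tendsto_pReLU [tendsto_intros]:
  "(f \<longlongrightarrow> l) F \<Longrightarrow> ((\<lambda>x. pReLU a (f x)) \<longlongrightarrow> pReLU a l) F"
  unfolding pReLU_def by (intro tendsto_intros)

lemma continuous_on_pReLU [continuous_intros]:
  "continuous_on S f \<Longrightarrow> continuous_on S (\<lambda>x. pReLU a (f x))"
  unfolding pReLU_def by (intro continuous_intros)

lemma continuous_on_relu [continuous_intros]:
  "continuous_on S f \<Longrightarrow> continuous_on S (\<lambda>x. relu (f x))"
  unfolding relu_def by (intro continuous_intros)

lemma relu_convex_comb_sign_change:
  fixes P Q s :: real
  assumes "P * Q < 0"
  shows "relu ((1 - s) * P + s * Q) =
           \<bar>Q - P\<bar> * relu (s - P / (P - Q)) + (if P > 0 then (1 - s) * P + s * Q else 0)"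
proof -
  have PQ: "P - Q \<noteq> 0" using assms by auto
  define t where "t = s - P / (P - Q)"
  have y: "(1 - s) * P + s * Q = (Q - P) * t" using PQ unfolding t_def by (simp add: field_simps)
  show ?thesis
  proof (cases "P > 0")
    case True
    then have "Q - P < 0" using assms by (simp add: mult_less_0_iff)
    have "relu ((Q - P) * t) = (P - Q) * relu t + (Q - P) * t"
    proof (cases "t \<ge> 0")
      case True
      then have "(Q - P) * t \<le> 0" using \<open>Q - P < 0\<close> by (simp add: mult_nonpos_nonneg)
      then show ?thesis using True unfolding relu_def by (simp add: algebra_simps)
    next
      case False
      then have "(Q - P) * t \<ge> 0" using \<open>Q - P < 0\<close> by (simp add: mult_nonpos_nonpos)
      then show ?thesis using False unfolding relu_def by simp
    qed
    then show ?thesis unfolding y t_def[symmetric] using True \<open>Q - P < 0\<close> by simp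
  next
    case False
    then have "Q - P > 0" using assms by (auto simp: mult_less_0_iff)
    then have "relu ((Q - P) * t) = (Q - P) * relu t"
      unfolding relu_def by (cases "t \<ge> 0") (auto simp: max_def mult_le_0_iff zero_le_mult_iff)
    then show ?thesis unfolding y t_def[symmetric] using False \<open>Q - P > 0\<close> by simp
  qed
qed

lemma relu_convex_comb_same_sign:
  fixes P Q s :: real
  assumes "P * Q \<ge> 0" "0 \<le> s" "s \<le> 1"
  shows "relu ((1 - s) * P + s * Q) = (1 - s) * relu P + s * relu Q"
proof -
  have "(P \<ge> 0 \<and> Q \<ge> 0) \<or> (P \<le> 0 \<and> Q \<le> 0)" using assms(1) by (auto simp: zero_le_mult_iff)
  moreover have "(1 - s) * P + s * Q \<le> 0" if "P \<le> 0" "Q \<le> 0"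
    using that assms by (simp add: add_nonpos_nonpos mult_nonneg_nonpos)
  ultimately show ?thesis using assms unfolding relu_def by (auto simp: max_def)
qed

definition relu_chord :: "real \<Rightarrow> real \<Rightarrow> real \<Rightarrow> real" where
  "relu_chord P Q s =
     (if P * Q < 0 then (if P > 0 then (1 - s) * P + s * Q else 0) else (1 - s) * relu P + s * relu Q)"

lemma relu_chord_affine: "relu_chord P Q s = relu_chord P Q 0 + s * (relu_chord P Q 1 - relu_chord P Q 0)"
  by (auto simp: relu_chord_def algebra_simps)

lemma relu_eq_kink_plus_chord:
  assumes "0 \<le> s" "s \<le> 1"
  shows "relu ((1 - s) * P + s * Q) =
           (if P * Q < 0 then \<bar>Q - P\<bar> * relu (s - P / (P - Q)) else 0) + relu_chord P Q s"
  using relu_convex_comb_sign_change[of P Q s] relu_convex_comb_same_sign[of P Q s] assms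
  by (auto simp: relu_chord_def)

lemma neuron_unit_normalization:
  fixes w :: "'a::real_inner"
  shows "\<exists>u v c. norm (u, v) = 1 \<and> (\<forall>x. A * pReLU a (w \<bullet> x + b) = c * pReLU a (u \<bullet> x + v))"
proof (cases "norm (w, b) = 0")
  case True
  then show ?thesis by (intro exI[of _ 0] exI[of _ 1] exI[of _ 0]) (simp add: norm_Pair)
next
  case False
  define r where "r = norm (w, b)"
  have r: "r > 0" using False by (simp add: r_def)
  have "w \<bullet> x + b = r * ((w /\<^sub>R r) \<bullet> x + b / r)" for x
    using r by (simp add: field_simps)
  then have "A * pReLU a (w \<bullet> x + b) = (A * r) * pReLU a ((w /\<^sub>R r) \<bullet> x + b / r)" for x
    using r by (simp add: pReLU_mult_nonneg)
  moreover have "norm (w /\<^sub>R r, b / r) = 1"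
  proof -
    have "(w /\<^sub>R r, b / r) = (w, b) /\<^sub>R r" by (simp add: divide_inverse_commute)
    then have "norm (w /\<^sub>R r, b / r) = \<bar>inverse r\<bar> * norm (w, b)" by (metis norm_scaleR)
    then show ?thesis using r by (simp add: r_def[symmetric])
  qed
  ultimately show ?thesis by blast
qed

definition open_cube :: "real \<Rightarrow> (real ^ 'd) set" where
  "open_cube B = box (- (\<chi> i. B)) (\<chi> i. B)"

lemma cube_eq_cbox: "cube B = cbox (- (\<chi> i. B)) (\<chi> i. B)"
  by (auto simp: cube_def mem_box_cart)

lemma closed_cube: "closed (cube B)"
  by (simp add: cube_eq_cbox closed_cbox)

lemma convex_cube: "convex (cube B)"
  by (simp add: cube_eq_cbox)

lemma open_open_cube: "open (open_cube B)"
  by (simp add: open_cube_def open_box)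

lemma convex_open_cube: "convex (open_cube B)"
  by (simp add: open_cube_def)

lemma open_cube_subset_cube: "open_cube B \<subseteq> cube B"
  unfolding open_cube_def cube_eq_cbox by (rule box_subset_cbox)

lemma closure_open_cube: "B > 0 \<Longrightarrow> closure (open_cube B) = cube B"
  unfolding open_cube_def cube_eq_cbox by (simp add: interval_eq_empty_cart)

lemma zero_in_cube: "B \<ge> 0 \<Longrightarrow> 0 \<in> cube B"
  by (simp add: cube_def)

lemma convex_add_scaleR_diff:
  assumes "convex S" "p \<in> S" "q \<in> S" "0 \<le> s" "s \<le> 1"
  shows "p + s *\<^sub>R (q - p) \<in> S"
proof -
  have "(1 - s) *\<^sub>R p + s *\<^sub>R q \<in> S" using assms by (intro convexD) auto
  then show ?thesis by (simp add: algebra_simps)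
qed

lemma mult_pos_imp_neg_iff: "0 < x * y \<Longrightarrow> x < 0 \<longleftrightarrow> y < (0::real)"
  by (auto simp: zero_less_mult_iff)

lemma eventually_at_right_affine_ne_0:
  fixes \<alpha> \<beta> :: real
  assumes "\<alpha> \<noteq> 0 \<or> \<beta> \<noteq> 0"
  shows "\<forall>\<^sub>F t in at_right 0. \<alpha> + t * \<beta> \<noteq> 0"
proof (cases "\<alpha> = 0")
  case True
  show ?thesis using eventually_at_right_less[of 0] by eventually_elim (use True assms in auto)
next
  case False
  have "((\<lambda>t. \<alpha> + t * \<beta>) \<longlongrightarrow> \<alpha> + 0 * \<beta>) (at_right 0)" by (intro tendsto_intros)
  then show ?thesis using False tendsto_imp_eventually_ne by fastforce
qed

lemma eventually_at_right_ray_in_open: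
  fixes y v :: "'a::real_normed_vector"
  assumes "open S" "y \<in> S"
  shows "\<forall>\<^sub>F t in at_right 0. y + t *\<^sub>R v \<in> S"
proof -
  have "((\<lambda>t. y + t *\<^sub>R v) \<longlongrightarrow> y + 0 *\<^sub>R v) (at_right 0)" by (intro tendsto_intros)
  then show ?thesis using assms topological_tendstoD by fastforce
qed

lemma exists_orthogonal_avoiding_hyperplanes:
  fixes u :: "'a::real_inner"
  assumes "finite A" "\<forall>a\<in>A. a \<noteq> 0 \<and> u \<bullet> a = 0"
  shows "\<exists>w. u \<bullet> w = 0 \<and> (\<forall>a\<in>A. a \<bullet> w \<noteq> 0)"
  using assms
proof (induction A rule: finite_induct)
  case empty
  show ?case by (rule exI[of _ 0]) simp
next
  case (insert b A)
  then obtain w where w: "u \<bullet> w = 0" "\<forall>a\<in>A. a \<bullet> w \<noteq> 0" by auto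
  show ?case
  proof (cases "b \<bullet> w \<noteq> 0")
    case True then show ?thesis using w by auto
  next
    case False
    \<comment> \<open>Move w along b, avoiding the finitely many steps that would put it on some hyperplane.\<close>
    define T where "T = insert 0 ((\<lambda>a. - (a \<bullet> w) / (a \<bullet> b)) ` A)"
    have "finite T" using insert by (simp add: T_def)
    then obtain t where t: "t \<notin> T" using ex_new_if_finite[OF infinite_UNIV_char_0] by blast
    define w' where "w' = w + t *\<^sub>R b"
    have "u \<bullet> w' = 0" using w insert by (simp add: w'_def inner_add_right)
    moreover have "b \<bullet> w' \<noteq> 0" using False t insert by (simp add: w'_def inner_add_right T_def)
    moreover have "a \<bullet> w' \<noteq> 0" if a: "a \<in> A" for a
    proof (cases "a \<bullet> b = 0")
      case True then show ?thesis using w a by (simp add: w'_def inner_add_right)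
    next
      case False
      have "t \<noteq> - (a \<bullet> w) / (a \<bullet> b)" using t a by (auto simp: T_def)
      then have "a \<bullet> w + t * (a \<bullet> b) \<noteq> 0" using False by (auto simp: field_simps)
      then show ?thesis by (simp add: w'_def inner_add_right)
    qed
    ultimately show ?thesis by auto
  qed
qed

lemma bounded_imp_convergent_subsequence_finite:
  fixes X :: "nat \<Rightarrow> nat \<Rightarrow> 'a::heine_borel"
  shows "\<forall>j<N. bounded (range (\<lambda>n. X n j)) \<Longrightarrow> \<exists>\<sigma> l. strict_mono \<sigma> \<and> (\<forall>j<N. (\<lambda>n. X (\<sigma> n) j) \<longlonglongrightarrow> l j)"
proof (induction N)
  case 0
  show ?case by (rule exI[of _ id]) (auto simp: strict_mono_def)
next
  case (Suc N)
  then obtain \<sigma>1 l where \<sigma>1: "strict_mono \<sigma>1" "\<forall>j<N. (\<lambda>n. X (\<sigma>1 n) j) \<longlonglongrightarrow> l j" by auto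
  have "bounded (range (\<lambda>n. X n N))" using Suc.prems by simp
  then have "bounded (range (\<lambda>n. X (\<sigma>1 n) N))" by (rule bounded_subset) auto
  then obtain l' \<sigma>2 where \<sigma>2: "strict_mono \<sigma>2" "((\<lambda>n. X (\<sigma>1 n) N) \<circ> \<sigma>2) \<longlonglongrightarrow> l'"
    using bounded_imp_convergent_subsequence by blast
  have "strict_mono (\<sigma>1 \<circ> \<sigma>2)" using \<sigma>1(1) \<sigma>2(1) by (rule strict_mono_o)
  moreover have "(\<lambda>n. X ((\<sigma>1 \<circ> \<sigma>2) n) j) \<longlonglongrightarrow> (l(N := l')) j" if "j < Suc N" for j
  proof (cases "j = N")
    case True then show ?thesis using \<sigma>2(2) by (simp add: comp_def)
  next
    case False
    then have "j < N" using that by simp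
    then have "((\<lambda>n. X (\<sigma>1 n) j) \<circ> \<sigma>2) \<longlonglongrightarrow> l j"
      using \<sigma>1(2) \<sigma>2(1) LIMSEQ_subseq_LIMSEQ by blast
    then show ?thesis using False by (simp add: comp_def)
  qed
  ultimately show ?case by blast
qed

lemma affine_on_closed_interval:
  fixes f :: "real \<Rightarrow> real"
  assumes "continuous_on {lo..hi} f" "lo < hi" "\<And>t. lo < t \<Longrightarrow> t < hi \<Longrightarrow> f t = c + d * t"
    and "z \<in> {lo..hi}"
  shows "f z = c + d * z"
proof -
  have "continuous_on (closure {lo<..<hi}) (\<lambda>t. f t - (c + d * t))"
    using assms(1,2) by (auto intro!: continuous_intros)
  then have "f z - (c + d * z) = 0"
    by (rule continuous_constant_on_closure) (use assms in auto)
  then show ?thesis by simp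
qed

section \<open>Functions affine on segments\<close>

definition segment_affine_on :: "'a::real_vector set \<Rightarrow> ('a \<Rightarrow> real) \<Rightarrow> bool" where
  "segment_affine_on S h \<longleftrightarrow>
     (\<forall>p\<in>S. \<forall>q\<in>S. \<forall>s. 0 \<le> s \<and> s \<le> 1 \<longrightarrow> h (p + s *\<^sub>R (q - p)) = (1 - s) * h p + s * h q)"

lemma segment_affine_onD:
  "segment_affine_on S h \<Longrightarrow> p \<in> S \<Longrightarrow> q \<in> S \<Longrightarrow> 0 \<le> s \<Longrightarrow> s \<le> 1 \<Longrightarrow>
     h (p + s *\<^sub>R (q - p)) = (1 - s) * h p + s * h q"
  by (simp add: segment_affine_on_def)

lemma segment_affine_on_tendsto:
  assumes "convex S" "\<And>n. segment_affine_on S (f n)" "\<And>x. x \<in> S \<Longrightarrow> (\<lambda>n. f n x) \<longlonglongrightarrow> g x"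
  shows "segment_affine_on S g"
  unfolding segment_affine_on_def
proof (intro ballI allI impI)
  fix p q and s :: real assume pq: "p \<in> S" "q \<in> S" and s: "0 \<le> s \<and> s \<le> 1"
  have "(\<lambda>n. f n (p + s *\<^sub>R (q - p))) \<longlonglongrightarrow> g (p + s *\<^sub>R (q - p))"
    using s by (intro assms(3) convex_add_scaleR_diff[OF assms(1) pq]) auto
  moreover have "(\<lambda>n. f n (p + s *\<^sub>R (q - p))) = (\<lambda>n. (1 - s) * f n p + s * f n q)"
    using segment_affine_onD[OF assms(2) pq] s by auto
  moreover have "(\<lambda>n. (1 - s) * f n p + s * f n q) \<longlonglongrightarrow> (1 - s) * g p + s * g q"
    by (intro tendsto_intros assms(3) pq)
  ultimately show "g (p + s *\<^sub>R (q - p)) = (1 - s) * g p + s * g q"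
    using LIMSEQ_unique by metis
qed

lemma segment_affine_on_cube_axis:
  fixes h :: "real ^ 'd \<Rightarrow> real"
  assumes B: "B > 0" and h: "segment_affine_on (cube B) h" and t: "\<bar>t\<bar> \<le> B"
  shows "h (t *\<^sub>R axis k 1) = h 0 + (h (B *\<^sub>R axis k 1) - h 0) / B * t"
proof -
  have axis_in_cube: "s *\<^sub>R axis k 1 \<in> cube B" if "\<bar>s\<bar> \<le> B" for s
    using that B by (auto simp: cube_def axis_def abs_le_iff)
  define q where "q = B *\<^sub>R axis k (1::real)"
  define q' where "q' = (- B) *\<^sub>R axis k (1::real)"
  have q: "q \<in> cube B" "q' \<in> cube B" "0 \<in> cube B"
    unfolding q_def q'_def using axis_in_cube[of B] axis_in_cube[of "-B"] B by (auto intro: zero_in_cube)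
  have "q' + (1/2) *\<^sub>R (q - q') = 0" by (simp add: q_def q'_def vec_eq_iff axis_def)
  then have mid: "h q' = 2 * h 0 - h q" using segment_affine_onD[OF h q(2,1), of "1/2"] by simp
  show ?thesis
  proof (cases "t \<ge> 0")
    case True
    have "0 + (t / B) *\<^sub>R (q - 0) = t *\<^sub>R axis k 1" using B by (simp add: q_def)
    then have "h (t *\<^sub>R axis k 1) = (1 - t / B) * h 0 + (t / B) * h q"
      using segment_affine_onD[OF h q(3,1), of "t / B"] t True B by simp
    moreover have "(h q - h 0) / B * t = (t / B) * h q - (t / B) * h 0"
      by (simp add: divide_inverse algebra_simps)
    ultimately show ?thesis by (simp add: q_def algebra_simps)
  next
    case False
    have "0 + (- t / B) *\<^sub>R (q' - 0) = t *\<^sub>R axis k 1" using B by (simp add: q'_def)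
    moreover have "0 \<le> - t / B" "- t / B \<le> 1"
      using t False B by (auto simp: divide_le_eq le_divide_eq abs_le_iff)
    ultimately have "h (t *\<^sub>R axis k 1) = (1 + t / B) * h 0 - (t / B) * h q'"
      using segment_affine_onD[OF h q(3,2), of "- t / B"] by simp
    moreover have "(h q - h 0) / B * t = (t / B) * h q - (t / B) * h 0"
      by (simp add: divide_inverse algebra_simps)
    ultimately show ?thesis using mid by (simp add: q_def algebra_simps)
  qed
qed

lemma segment_affine_on_cube_add:
  fixes h :: "real ^ 'd \<Rightarrow> real"
  assumes B: "B > 0" and h: "segment_affine_on (cube B) h"
    and x: "x \<in> cube B" and y: "y \<in> cube B" and xy: "x + y \<in> cube B"
  shows "h (x + y) = h x + h y - h 0"
proof -
  \<comment> \<open>(x + y) / 2 is both the midpoint of x and y and the midpoint of 0 and x + y.\<close>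
  have "x + (1/2) *\<^sub>R (y - x) = (1/2) *\<^sub>R (x + y)" by (simp add: vec_eq_iff algebra_simps)
  moreover have "0 + (1/2) *\<^sub>R ((x + y) - 0) = (1/2) *\<^sub>R (x + y)" by simp
  ultimately have "(1/2) * h x + (1/2) * h y = (1/2) * h 0 + (1/2) * h (x + y)"
    using segment_affine_onD[OF h x y, of "1/2"] segment_affine_onD[OF h zero_in_cube xy, of "1/2"] B
    by simp
  then show ?thesis by linarith
qed

lemma segment_affine_on_cube_imp_affine:
  fixes h :: "real ^ 'd \<Rightarrow> real"
  assumes B: "B > 0" and h: "segment_affine_on (cube B) h"
  shows "\<exists>w b. \<forall>x\<in>cube B. h x = w \<bullet> x + b"
proof -
  define w :: "real ^ 'd" where "w = (\<chi> i. (h (B *\<^sub>R axis i 1) - h 0) / B)"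
  have coords: "\<forall>x\<in>cube B. (\<forall>i. i \<notin> S \<longrightarrow> x $ i = 0) \<longrightarrow> h x = h 0 + (\<Sum>i\<in>S. w $ i * x $ i)"
    if "finite S" for S
    using that
  proof (induction S rule: finite_induct)
    case empty
    have "x = 0" if "\<forall>i. x $ i = 0" for x :: "real ^ 'd" using that by (simp add: vec_eq_iff)
    then show ?case by auto
  next
    case (insert k S)
    show ?case
    proof (intro ballI impI)
      fix x :: "real ^ 'd" assume x: "x \<in> cube B" and supp: "\<forall>i. i \<notin> insert k S \<longrightarrow> x $ i = 0"
      define y where "y = (x $ k) *\<^sub>R axis k (1::real)"
      define x' where "x' = x - y"
      have x'_nth: "x' $ i = (if i = k then 0 else x $ i)" for i by (simp add: x'_def y_def axis_def)
      have x': "x' \<in> cube B" using x B by (auto simp: cube_def x'_nth)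
      have y: "y \<in> cube B" using x by (auto simp: y_def cube_def axis_def)
      have "h x' = h 0 + (\<Sum>i\<in>S. w $ i * x' $ i)" using insert.IH x' supp by (auto simp: x'_nth)
      also have "(\<Sum>i\<in>S. w $ i * x' $ i) = (\<Sum>i\<in>S. w $ i * x $ i)"
        using insert.hyps(2) by (intro sum.cong) (auto simp: x'_nth)
      finally have "h x' = h 0 + (\<Sum>i\<in>S. w $ i * x $ i)" .
      moreover have "- B \<le> x $ k \<and> x $ k \<le> B" using x unfolding cube_def by blast
      then have "h y = h 0 + w $ k * x $ k"
        using segment_affine_on_cube_axis[OF B h, of "x $ k" k] by (simp add: y_def w_def abs_le_iff)
      moreover have "h x = h x' + h y - h 0"
        using segment_affine_on_cube_add[OF B h x' y] x by (simp add: x'_def)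
      ultimately show "h x = h 0 + (\<Sum>i\<in>insert k S. w $ i * x $ i)"
        using insert.hyps by simp
    qed
  qed
  have "h x = w \<bullet> x + h 0" if "x \<in> cube B" for x
    using coords[of UNIV] that by (simp add: inner_vec_def)
  then show ?thesis by blast
qed

section \<open>Limits of piecewise linear functions with converging kinks\<close>

locale kinked_limit =
  fixes J :: "nat set" and w r :: "nat \<Rightarrow> nat \<Rightarrow> real" and kink :: "nat \<Rightarrow> real"
    and \<phi> :: "nat \<Rightarrow> real \<Rightarrow> real" and \<psi> :: "real \<Rightarrow> real" and X Y :: "nat \<Rightarrow> real"
  assumes finite_J: "finite J"
    and r_tendsto: "\<And>j. j \<in> J \<Longrightarrow> (\<lambda>n. r n j) \<longlonglongrightarrow> kink j"
    and kink_in_01: "\<And>j. j \<in> J \<Longrightarrow> 0 < kink j \<and> kink j < 1"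
    and \<phi>_tendsto: "\<And>s. s \<in> {0..1} \<Longrightarrow> (\<lambda>n. \<phi> n s) \<longlonglongrightarrow> \<psi> s"
    and continuous_\<psi>: "continuous_on {0..1} \<psi>"
    and \<phi>_eq: "\<forall>\<^sub>F n in sequentially. \<forall>s\<in>{0..1}.
                 \<phi> n s = X n + Y n * s + (\<Sum>j\<in>J. w n j * relu (s - r n j))"
begin

definition kinks :: "real set" where
  "kinks = kink ` J"

definition below :: "real \<Rightarrow> nat set" where
  "below s = {j\<in>J. kink j < s}"

definition slope_sum :: "nat \<Rightarrow> real \<Rightarrow> real" where
  "slope_sum n s = (\<Sum>j\<in>below s. w n j)"

definition offset_sum :: "nat \<Rightarrow> real \<Rightarrow> real" where
  "offset_sum n s = (\<Sum>j\<in>below s. w n j * r n j)"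

definition gap_slope :: "real \<Rightarrow> real" where
  "gap_slope s = lim (\<lambda>n. Y n + slope_sum n s)"

definition gap_offset :: "real \<Rightarrow> real" where
  "gap_offset s = lim (\<lambda>n. X n - offset_sum n s)"

lemma finite_kinks: "finite kinks"
  using finite_J by (simp add: kinks_def)

lemma finite_below: "finite (below s)"
  using finite_J by (simp add: below_def)

lemma kinks_in_01: "z \<in> kinks \<Longrightarrow> 0 < z \<and> z < 1"
  using kink_in_01 by (auto simp: kinks_def)

lemma \<phi>_eq_off_kinks:
  assumes s: "s \<in> {0..1}" "s \<notin> kinks"
  shows "\<forall>\<^sub>F n in sequentially. \<phi> n s = X n + Y n * s + slope_sum n s * s - offset_sum n s"
proof -
  \<comment> \<open>Eventually every breakpoint r n j lies on the same side of s as its limit.\<close>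
  have "\<forall>j\<in>J. \<forall>\<^sub>F n in sequentially. (kink j < s \<longrightarrow> r n j < s) \<and> (kink j > s \<longrightarrow> r n j > s)"
  proof
    fix j assume j: "j \<in> J"
    have "kink j \<noteq> s" using s j by (auto simp: kinks_def)
    then consider "kink j < s" | "kink j > s" by linarith
    then show "\<forall>\<^sub>F n in sequentially. (kink j < s \<longrightarrow> r n j < s) \<and> (kink j > s \<longrightarrow> r n j > s)"
    proof cases
      case 1
      show ?thesis using order_tendstoD(2)[OF r_tendsto[OF j] 1] by eventually_elim (use 1 in auto)
    next
      case 2
      show ?thesis using order_tendstoD(1)[OF r_tendsto[OF j] 2] by eventually_elim (use 2 in auto)
    qed
  qed
  then have "\<forall>\<^sub>F n in sequentially. \<forall>j\<in>J. (kink j < s \<longrightarrow> r n j < s) \<and> (kink j > s \<longrightarrow> r n j > s)"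
    by (rule eventually_ball_finite[OF finite_J])
  then show ?thesis using \<phi>_eq
  proof eventually_elim
    case (elim n)
    have "(\<Sum>j\<in>J. w n j * relu (s - r n j)) = (\<Sum>j\<in>J. if kink j < s then w n j * (s - r n j) else 0)"
    proof (rule sum.cong)
      fix j assume j: "j \<in> J"
      have "kink j \<noteq> s" using s j by (auto simp: kinks_def)
      then show "w n j * relu (s - r n j) = (if kink j < s then w n j * (s - r n j) else 0)"
        using elim(1) j unfolding relu_def by (cases "kink j < s") auto
    qed simp
    also have "\<dots> = (\<Sum>j\<in>below s. w n j * (s - r n j))"
      by (simp add: sum.inter_filter[symmetric] below_def finite_J)
    also have "\<dots> = slope_sum n s * s - offset_sum n s"
      unfolding slope_sum_def offset_sum_def sum_distrib_right sum_subtractf[symmetric]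
      by (rule sum.cong) (simp_all add: algebra_simps)
    finally show ?case using elim(2) s by auto
  qed
qed

lemma exists_gap_neighbour:
  assumes s: "s \<in> {0..1}" "s \<notin> kinks"
  shows "\<exists>s'. s' \<in> {0..1} \<and> s' \<notin> kinks \<and> s' \<noteq> s \<and> below s' = below s"
proof -
  obtain \<delta> where \<delta>: "\<delta> > 0" "\<forall>z\<in>kinks. z \<noteq> s \<longrightarrow> \<delta> \<le> dist s z"
    using finite_set_avoid[OF finite_kinks] by blast
  define \<delta>' where "\<delta>' = min \<delta> (1/2)"
  have \<delta>': "0 < \<delta>'" "\<delta>' \<le> \<delta>" "\<delta>' \<le> 1/2" using \<delta> by (auto simp: \<delta>'_def)
  define s' where "s' = (if s \<le> 1/2 then s + \<delta>'/2 else s - \<delta>'/2)"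
  have s': "s' \<in> {0..1}" "s' \<noteq> s" "\<bar>s' - s\<bar> = \<delta>'/2" using s \<delta>' by (auto simp: s'_def)
  have same_side: "z < s' \<longleftrightarrow> z < s" if z: "z \<in> kinks" for z
  proof -
    have "\<delta> \<le> \<bar>s - z\<bar>" using \<delta> z s by (auto simp: dist_real_def)
    then have "\<delta> \<le> s - z \<or> \<delta> \<le> z - s" by (cases "z \<le> s") (auto simp: abs_if)
    moreover have "s' = s + \<delta>'/2 \<or> s' = s - \<delta>'/2" by (simp add: s'_def)
    ultimately show ?thesis using \<delta>' by linarith
  qed
  have "s' \<notin> kinks"
  proof
    assume "s' \<in> kinks"
    then have "\<delta> \<le> \<bar>s - s'\<bar>" using \<delta> s' by (auto simp: dist_real_def)
    then show False using s' \<delta>' by (simp add: abs_minus_commute)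
  qed
  moreover have "below s' = below s" using same_side by (auto simp: below_def kinks_def)
  ultimately show ?thesis using s' by blast
qed

lemma tendsto_off_kinks:
  assumes s: "s \<in> {0..1}" "s \<notin> kinks"
  shows "(\<lambda>n. Y n + slope_sum n s) \<longlonglongrightarrow> gap_slope s"
    and "(\<lambda>n. X n - offset_sum n s) \<longlonglongrightarrow> gap_offset s"
    and "\<psi> s = gap_offset s + gap_slope s * s"
proof -
  obtain s' where s': "s' \<in> {0..1}" "s' \<notin> kinks" "s' \<noteq> s" "below s' = below s"
    using exists_gap_neighbour[OF s] by blast
  have same: "slope_sum n s' = slope_sum n s" "offset_sum n s' = offset_sum n s" for n
    using s' by (simp_all add: slope_sum_def offset_sum_def)
  have ss': "s - s' \<noteq> 0" using s' by simp
  \<comment> \<open>On a gap, \<phi> n is eventually affine with slope Y n + slope_sum n s: take difference quotients.\<close>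
  have "\<forall>\<^sub>F n in sequentially. (\<phi> n s - \<phi> n s') / (s - s') = Y n + slope_sum n s"
    using \<phi>_eq_off_kinks[OF s] \<phi>_eq_off_kinks[OF s'(1,2)]
  proof eventually_elim
    case (elim n)
    then have "\<phi> n s - \<phi> n s' = (Y n + slope_sum n s) * (s - s')" by (simp add: same algebra_simps)
    then show ?case using ss' by simp
  qed
  moreover have "(\<lambda>n. (\<phi> n s - \<phi> n s') / (s - s')) \<longlonglongrightarrow> (\<psi> s - \<psi> s') / (s - s')"
    using ss' by (intro tendsto_intros \<phi>_tendsto s s')
  ultimately have slope: "(\<lambda>n. Y n + slope_sum n s) \<longlonglongrightarrow> (\<psi> s - \<psi> s') / (s - s')"
    by (rule Lim_transform_eventually[rotated])
  then show slope': "(\<lambda>n. Y n + slope_sum n s) \<longlonglongrightarrow> gap_slope s"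
    by (simp add: gap_slope_def limI)
  have "\<forall>\<^sub>F n in sequentially. \<phi> n s - (Y n + slope_sum n s) * s = X n - offset_sum n s"
    using \<phi>_eq_off_kinks[OF s] by eventually_elim (simp add: algebra_simps)
  moreover have "(\<lambda>n. \<phi> n s - (Y n + slope_sum n s) * s) \<longlonglongrightarrow> \<psi> s - gap_slope s * s"
    by (intro tendsto_intros \<phi>_tendsto s slope')
  ultimately have offset: "(\<lambda>n. X n - offset_sum n s) \<longlonglongrightarrow> \<psi> s - gap_slope s * s"
    by (rule Lim_transform_eventually[rotated])
  then show "(\<lambda>n. X n - offset_sum n s) \<longlonglongrightarrow> gap_offset s"
    by (simp add: gap_offset_def limI)
  show "\<psi> s = gap_offset s + gap_slope s * s"
    using offset by (simp add: gap_offset_def limI)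
qed

lemma convergent_X_Y: "X \<longlonglongrightarrow> lim X" "Y \<longlonglongrightarrow> lim Y"
proof -
  define s0 where "s0 = Min (insert 1 kinks) / 2"
  have "0 < Min (insert 1 kinks)" using finite_kinks kinks_in_01 by (subst Min_gr_iff) auto
  moreover have "Min (insert 1 kinks) \<le> 1" using finite_kinks by (intro Min_le) auto
  moreover have "Min (insert 1 kinks) \<le> z" if "z \<in> kinks" for z
    using finite_kinks that by (intro Min_le) auto
  ultimately have s0: "s0 \<in> {0..1}" "s0 \<notin> kinks" "\<forall>z\<in>kinks. s0 < z"
    unfolding s0_def by force+
  then have "below s0 = {}" by (auto simp: below_def kinks_def)
  then show "X \<longlonglongrightarrow> lim X" "Y \<longlonglongrightarrow> lim Y"
    using tendsto_off_kinks(1,2)[OF s0(1,2)]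
    by (auto simp: slope_sum_def offset_sum_def convergent_LIMSEQ_iff[symmetric] convergent_def)
qed

lemma tendsto_sums_off_kinks:
  assumes s: "s \<in> {0..1}" "s \<notin> kinks"
  shows "(\<lambda>n. slope_sum n s) \<longlonglongrightarrow> gap_slope s - lim Y"
    and "(\<lambda>n. offset_sum n s) \<longlonglongrightarrow> lim X - gap_offset s"
proof -
  have "(\<lambda>n. (Y n + slope_sum n s) - Y n) \<longlonglongrightarrow> gap_slope s - lim Y"
    by (intro tendsto_intros tendsto_off_kinks[OF s] convergent_X_Y)
  then show "(\<lambda>n. slope_sum n s) \<longlonglongrightarrow> gap_slope s - lim Y" by simp
  have "(\<lambda>n. X n - (X n - offset_sum n s)) \<longlonglongrightarrow> lim X - gap_offset s"
    by (intro tendsto_intros tendsto_off_kinks[OF s] convergent_X_Y)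
  then show "(\<lambda>n. offset_sum n s) \<longlonglongrightarrow> lim X - gap_offset s" by simp
qed

lemma kink_isolated:
  assumes z: "z \<in> kinks"
  shows "\<exists>\<delta>>0. 0 \<le> z - \<delta> \<and> z + \<delta> \<le> 1 \<and> (\<forall>t. z - \<delta> < t \<and> t < z + \<delta> \<and> t \<noteq> z \<longrightarrow> t \<notin> kinks)"
proof -
  obtain \<delta>0 where \<delta>0: "\<delta>0 > 0" "\<forall>x\<in>kinks. x \<noteq> z \<longrightarrow> \<delta>0 \<le> dist z x"
    using finite_set_avoid[OF finite_kinks] by blast
  define \<delta> where "\<delta> = min \<delta>0 (min z (1 - z))"
  have "\<delta> > 0" using \<delta>0 kinks_in_01[OF z] by (simp add: \<delta>_def)
  moreover have "0 \<le> z - \<delta>" "z + \<delta> \<le> 1" by (auto simp: \<delta>_def)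
  moreover have "t \<notin> kinks" if t: "z - \<delta> < t" "t < z + \<delta>" "t \<noteq> z" for t
  proof
    assume "t \<in> kinks"
    then have "\<delta>0 \<le> \<bar>z - t\<bar>" using \<delta>0 t by (auto simp: dist_real_def)
    moreover have "\<delta> \<le> \<delta>0" by (simp add: \<delta>_def)
    moreover have "\<bar>z - t\<bar> < \<delta>" using t by (simp add: abs_less_iff; linarith)
    ultimately show False by linarith
  qed
  ultimately show ?thesis by blast
qed

lemma kink_sides:
  assumes z: "z \<in> kinks"
  obtains sL sR where "sL \<in> {0..1}" "sL \<notin> kinks" "sR \<in> {0..1}" "sR \<notin> kinks"
    and "below sL = {j\<in>J. kink j < z}" "below sR = {j\<in>J. kink j < z} \<union> {j\<in>J. kink j = z}"
    and "\<psi> z = gap_offset sL + gap_slope sL * z" "\<psi> z = gap_offset sR + gap_slope sR * z"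
proof -
  obtain \<delta> where \<delta>: "\<delta> > 0" "0 \<le> z - \<delta>" "z + \<delta> \<le> 1"
    and no_kinks: "\<And>t. z - \<delta> < t \<Longrightarrow> t < z + \<delta> \<Longrightarrow> t \<noteq> z \<Longrightarrow> t \<notin> kinks"
    using kink_isolated[OF z] by blast
  have kink_not_near: "\<not> (z - \<delta> < kink j \<and> kink j < z + \<delta> \<and> kink j \<noteq> z)" if "j \<in> J" for j
    using no_kinks that by (auto simp: kinks_def)
  have below_left: "below t = {j\<in>J. kink j < z}" if t: "z - \<delta> < t" "t < z" for t
    using t kink_not_near by (force simp: below_def)
  have below_right: "below t = {j\<in>J. kink j < z} \<union> {j\<in>J. kink j = z}" if t: "z < t" "t < z + \<delta>" for t
    using t kink_not_near by (force simp: below_def)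
  have off: "t \<in> {0..1}" "t \<notin> kinks" if "z - \<delta> < t" "t < z + \<delta>" "t \<noteq> z" for t
    using \<delta> no_kinks that by auto
  define sL where "sL = z - \<delta>/2"
  define sR where "sR = z + \<delta>/2"
  \<comment> \<open>On each side of z, \<psi> is affine with the coefficients of that gap; continuity extends this to z.\<close>
  have "\<psi> z = gap_offset sL + gap_slope sL * z"
  proof (rule affine_on_closed_interval[of "z - \<delta>" z])
    show "continuous_on {z - \<delta>..z} \<psi>" by (rule continuous_on_subset[OF continuous_\<psi>]) (use \<delta> in auto)
    fix t assume t: "z - \<delta> < t" "t < z"
    then have "below t = below sL" using below_left[OF t] below_left[of sL] \<delta> by (simp add: sL_def)
    then show "\<psi> t = gap_offset sL + gap_slope sL * t"
      using tendsto_off_kinks(3)[OF off[of t]] t \<delta> by (simp add: gap_slope_def gap_offset_def slope_sum_def offset_sum_def)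
  qed (use \<delta> in auto)
  moreover have "\<psi> z = gap_offset sR + gap_slope sR * z"
  proof (rule affine_on_closed_interval[of z "z + \<delta>"])
    show "continuous_on {z..z + \<delta>} \<psi>" by (rule continuous_on_subset[OF continuous_\<psi>]) (use \<delta> in auto)
    fix t assume t: "z < t" "t < z + \<delta>"
    then have "below t = below sR" using below_right[OF t] below_right[of sR] \<delta> by (simp add: sR_def)
    then show "\<psi> t = gap_offset sR + gap_slope sR * t"
      using tendsto_off_kinks(3)[OF off[of t]] t \<delta> by (simp add: gap_slope_def gap_offset_def slope_sum_def offset_sum_def)
  qed (use \<delta> in auto)
  moreover have "below sL = {j\<in>J. kink j < z}" using below_left[of sL] \<delta> by (simp add: sL_def)
  moreover have "below sR = {j\<in>J. kink j < z} \<union> {j\<in>J. kink j = z}"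
    using below_right[of sR] \<delta> by (simp add: sR_def)
  moreover have "sL \<in> {0..1}" "sL \<notin> kinks" "sR \<in> {0..1}" "sR \<notin> kinks"
    using off[of sL] off[of sR] \<delta> by (auto simp: sL_def sR_def)
  ultimately show ?thesis using that by blast
qed

definition kink_weight :: "real \<Rightarrow> real" where
  "kink_weight z = lim (\<lambda>n. \<Sum>j\<in>{j\<in>J. kink j = z}. w n j)"

lemma tendsto_kink_weight:
  shows "(\<lambda>n. \<Sum>j\<in>{j\<in>J. kink j = z}. w n j) \<longlonglongrightarrow> kink_weight z"
    and "(\<lambda>n. \<Sum>j\<in>{j\<in>J. kink j = z}. w n j * r n j) \<longlonglongrightarrow> kink_weight z * z"
proof -
  have "\<exists>k. (\<lambda>n. \<Sum>j\<in>{j\<in>J. kink j = z}. w n j) \<longlonglongrightarrow> k \<and>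
            (\<lambda>n. \<Sum>j\<in>{j\<in>J. kink j = z}. w n j * r n j) \<longlonglongrightarrow> k * z"
  proof (cases "z \<in> kinks")
    case False
    then have empty: "{j\<in>J. kink j = z} = {}" by (auto simp: kinks_def)
    show ?thesis unfolding empty by (intro exI[of _ 0]) simp
  next
    case True
    obtain sL sR where s: "sL \<in> {0..1}" "sL \<notin> kinks" "sR \<in> {0..1}" "sR \<notin> kinks"
      and below_s: "below sL = {j\<in>J. kink j < z}" "below sR = {j\<in>J. kink j < z} \<union> {j\<in>J. kink j = z}"
      and \<psi>z: "\<psi> z = gap_offset sL + gap_slope sL * z" "\<psi> z = gap_offset sR + gap_slope sR * z"
      using kink_sides[OF True] by blast
    \<comment> \<open>The group at z is what separates the left and the right gap.\<close>
    have disj: "{j\<in>J. kink j < z} \<inter> {j\<in>J. kink j = z} = {}" by auto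
    have fin: "finite {j\<in>J. kink j < z}" "finite {j\<in>J. kink j = z}" using finite_J by auto
    have "(\<Sum>j\<in>{j\<in>J. kink j = z}. w n j) = slope_sum n sR - slope_sum n sL" for n
      unfolding slope_sum_def below_s by (simp add: sum.union_disjoint[OF fin disj])
    moreover have "(\<Sum>j\<in>{j\<in>J. kink j = z}. w n j * r n j) = offset_sum n sR - offset_sum n sL" for n
      unfolding offset_sum_def below_s by (simp add: sum.union_disjoint[OF fin disj])
    moreover have "(\<lambda>n. slope_sum n sR - slope_sum n sL) \<longlonglongrightarrow> gap_slope sR - gap_slope sL"
      using tendsto_diff[OF tendsto_sums_off_kinks(1)[OF s(3,4)] tendsto_sums_off_kinks(1)[OF s(1,2)]]
      by simp
    moreover have "(\<lambda>n. offset_sum n sR - offset_sum n sL) \<longlonglongrightarrow> (gap_slope sR - gap_slope sL) * z"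
    proof -
      have "(lim X - gap_offset sR) - (lim X - gap_offset sL) = (gap_slope sR - gap_slope sL) * z"
        using \<psi>z by (simp add: algebra_simps)
      then show ?thesis
        using tendsto_diff[OF tendsto_sums_off_kinks(2)[OF s(3,4)] tendsto_sums_off_kinks(2)[OF s(1,2)]]
        by simp
    qed
    ultimately show ?thesis by auto
  qed
  then obtain k where "(\<lambda>n. \<Sum>j\<in>{j\<in>J. kink j = z}. w n j) \<longlonglongrightarrow> k"
      and "(\<lambda>n. \<Sum>j\<in>{j\<in>J. kink j = z}. w n j * r n j) \<longlonglongrightarrow> k * z"
    by blast
  moreover from this(1) have "kink_weight z = k" by (simp add: kink_weight_def limI)
  ultimately show "(\<lambda>n. \<Sum>j\<in>{j\<in>J. kink j = z}. w n j) \<longlonglongrightarrow> kink_weight z"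
    and "(\<lambda>n. \<Sum>j\<in>{j\<in>J. kink j = z}. w n j * r n j) \<longlonglongrightarrow> kink_weight z * z"
    by simp_all
qed

lemma gap_coefficients:
  assumes s: "s \<in> {0..1}" "s \<notin> kinks"
  shows "gap_slope s = lim Y + (\<Sum>z\<in>{z\<in>kinks. z < s}. kink_weight z)"
    and "gap_offset s = lim X - (\<Sum>z\<in>{z\<in>kinks. z < s}. kink_weight z * z)"
proof -
  have fin: "finite {z\<in>kinks. z < s}" using finite_kinks by simp
  have img: "kink ` below s \<subseteq> {z\<in>kinks. z < s}" by (auto simp: below_def kinks_def)
  have group: "{j \<in> below s. kink j = z} = {j\<in>J. kink j = z}" if "z \<in> {z\<in>kinks. z < s}" for z
    using that by (auto simp: below_def)
  have "slope_sum n s = (\<Sum>z\<in>{z\<in>kinks. z < s}. \<Sum>j\<in>{j\<in>J. kink j = z}. w n j)" for n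
    unfolding slope_sum_def sum.group[OF finite_below fin img, symmetric] by (rule sum.cong) (auto simp: group)
  then have "(\<lambda>n. slope_sum n s) \<longlonglongrightarrow> (\<Sum>z\<in>{z\<in>kinks. z < s}. kink_weight z)"
    by (simp add: tendsto_sum tendsto_kink_weight)
  then show "gap_slope s = lim Y + (\<Sum>z\<in>{z\<in>kinks. z < s}. kink_weight z)"
    using LIMSEQ_unique[OF tendsto_sums_off_kinks(1)[OF s]] by fastforce
  have "offset_sum n s = (\<Sum>z\<in>{z\<in>kinks. z < s}. \<Sum>j\<in>{j\<in>J. kink j = z}. w n j * r n j)" for n
    unfolding offset_sum_def sum.group[OF finite_below fin img, symmetric] by (rule sum.cong) (auto simp: group)
  then have "(\<lambda>n. offset_sum n s) \<longlonglongrightarrow> (\<Sum>z\<in>{z\<in>kinks. z < s}. kink_weight z * z)"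
    by (simp add: tendsto_sum tendsto_kink_weight)
  then show "gap_offset s = lim X - (\<Sum>z\<in>{z\<in>kinks. z < s}. kink_weight z * z)"
    using LIMSEQ_unique[OF tendsto_sums_off_kinks(2)[OF s]] by fastforce
qed

lemma \<psi>_eq:
  assumes s: "s \<in> {0..1}"
  shows "\<psi> s = lim X + lim Y * s + (\<Sum>z\<in>kinks. kink_weight z * relu (s - z))"
proof -
  \<comment> \<open>Evaluate with the coefficients of a gap point s1 having the same kinks below it as s.\<close>
  obtain s1 where s1: "s1 \<in> {0..1}" "s1 \<notin> kinks" "{z\<in>kinks. z < s1} = {z\<in>kinks. z < s}"
      and \<psi>s: "\<psi> s = gap_offset s1 + gap_slope s1 * s"
  proof (cases "s \<in> kinks")
    case False
    then show ?thesis using that[of s] tendsto_off_kinks(3)[OF s False] s by blast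
  next
    case True
    obtain sL where sL: "sL \<in> {0..1}" "sL \<notin> kinks" "below sL = {j\<in>J. kink j < s}"
        "\<psi> s = gap_offset sL + gap_slope sL * s"
      using kink_sides[OF True] by metis
    have "{z\<in>kinks. z < sL} = {z\<in>kinks. z < s}"
    proof -
      have "z < sL \<longleftrightarrow> z < s" if "z \<in> kinks" for z
      proof -
        obtain j where j: "j \<in> J" "z = kink j" using \<open>z \<in> kinks\<close> by (auto simp: kinks_def)
        then have "j \<in> below sL \<longleftrightarrow> kink j < s" using sL(3) by auto
        then show ?thesis using j by (simp add: below_def)
      qed
      then show ?thesis by auto
    qed
    then show ?thesis using that sL by blast
  qed
  have "(\<Sum>z\<in>kinks. kink_weight z * relu (s - z)) = (\<Sum>z\<in>kinks. if z < s then kink_weight z * (s - z) else 0)"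
    by (rule sum.cong) (auto simp: relu_def)
  also have "\<dots> = (\<Sum>z\<in>{z\<in>kinks. z < s}. kink_weight z * (s - z))"
    by (simp add: sum.inter_filter[OF finite_kinks])
  also have "\<dots> = (\<Sum>z\<in>{z\<in>kinks. z < s}. kink_weight z) * s - (\<Sum>z\<in>{z\<in>kinks. z < s}. kink_weight z * z)"
    unfolding sum_distrib_right sum_subtractf[symmetric] by (rule sum.cong) (simp_all add: algebra_simps)
  finally show ?thesis using \<psi>s gap_coefficients[OF s1(1,2)] s1(3) by (simp add: algebra_simps)
qed

lemma kinked_limit_representation:
  "\<exists>A B. \<forall>s\<in>{0..1}. \<psi> s = A + B * s + (\<Sum>z\<in>kink ` J. kink_weight z * relu (s - z))"
  using \<psi>_eq unfolding kinks_def by blast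

end

section \<open>Limits of normalized shallow networks\<close>

lemma RNN_shallow_of_partial_network_plus_affine:
  fixes g :: "real ^ 'd \<Rightarrow> real"
  assumes a: "a \<ge> 0" and R: "R \<subseteq> {..<N0}" and spare: "k < N0" "k \<notin> R"
    and g: "\<forall>x\<in>cube B. g x = (\<Sum>r\<in>R. \<gamma> r * pReLU a (u r \<bullet> x + v r)) + w \<bullet> x + b"
  shows "g \<in> RNN_shallow a N0 B"
proof -
  obtain M where M: "\<forall>x\<in>cube B :: (real ^ 'd) set. norm x \<le> M"
    by (metis bounded_iff compact_cbox compact_imp_bounded cube_eq_cbox)
  \<comment> \<open>The spare neuron k realizes the affine part, shifted so that its input is nonnegative on the cube.\<close>
  define T where "T = norm w * M"
  have T: "w \<bullet> x + T \<ge> 0" if "x \<in> cube B" for x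
  proof -
    have "\<bar>w \<bullet> x\<bar> \<le> norm w * norm x" by (rule Cauchy_Schwarz_ineq2)
    also have "\<dots> \<le> T" unfolding T_def using M that by (intro mult_left_mono) auto
    finally show ?thesis by linarith
  qed
  define A1 where "A1 j = (if j \<in> R then u j else if j = k then w else 0)" for j
  define b1 where "b1 j = (if j \<in> R then v j else if j = k then T else 0)" for j
  define A2 where "A2 j = (if j \<in> R then \<gamma> j else if j = k then 1 / max 1 a else 0)" for j
  have "g x = (\<Sum>j<N0. A2 j * pReLU a (A1 j \<bullet> x + b1 j)) + (b - T)" if x: "x \<in> cube B" for x
  proof -
    have "(\<Sum>j<N0. A2 j * pReLU a (A1 j \<bullet> x + b1 j)) =
          (\<Sum>j<N0. (if j \<in> R then \<gamma> j * pReLU a (u j \<bullet> x + v j) else 0) +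
                   (if j = k then 1 / max 1 a * pReLU a (w \<bullet> x + T) else 0))"
      by (rule sum.cong) (use spare in \<open>auto simp: A1_def b1_def A2_def\<close>)
    also have "\<dots> = (\<Sum>r\<in>R. \<gamma> r * pReLU a (u r \<bullet> x + v r)) + 1 / max 1 a * pReLU a (w \<bullet> x + T)"
      using R spare by (simp add: sum.distrib sum.inter_restrict[symmetric] Int_absorb1)
    also have "1 / max 1 a * pReLU a (w \<bullet> x + T) = w \<bullet> x + T"
      using pReLU_of_nonneg[OF a T[OF x]] by simp
    finally show ?thesis using g x by simp
  qed
  then show ?thesis unfolding RNN_shallow_def by blast
qed

locale prelu_limit =
  fixes a B :: real and N :: nat
    and c :: "nat \<Rightarrow> nat \<Rightarrow> real" and pu :: "nat \<Rightarrow> nat \<Rightarrow> real ^ 'd" and pv :: "nat \<Rightarrow> nat \<Rightarrow> real"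
    and e :: "nat \<Rightarrow> real" and g :: "real ^ 'd \<Rightarrow> real" and U :: "nat \<Rightarrow> real ^ 'd" and V :: "nat \<Rightarrow> real"
  assumes B_pos: "B > 0" and a_nonneg: "a \<ge> 0" and a_ne_1: "a \<noteq> 1"
    and tendsto_network:
      "\<And>x. x \<in> cube B \<Longrightarrow> (\<lambda>n. (\<Sum>j<N. c n j * pReLU a (pu n j \<bullet> x + pv n j)) + e n) \<longlonglongrightarrow> g x"
    and continuous_g: "continuous_on (cube B) g"
    and pu_tendsto: "\<And>j. j < N \<Longrightarrow> (\<lambda>n. pu n j) \<longlonglongrightarrow> U j"
    and pv_tendsto: "\<And>j. j < N \<Longrightarrow> (\<lambda>n. pv n j) \<longlonglongrightarrow> V j"
    and unit: "\<And>j. j < N \<Longrightarrow> norm (U j) ^ 2 + V j ^ 2 = 1"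
begin

definition lin_coeff :: real where
  "lin_coeff = min 1 a"

definition kink_coeff :: real where
  "kink_coeff = \<bar>1 - a\<bar>"

definition L :: "nat \<Rightarrow> real ^ 'd \<Rightarrow> real" where
  "L j x = U j \<bullet> x + V j"

definition F :: "nat \<Rightarrow> real ^ 'd \<Rightarrow> real" where
  "F n x = (\<Sum>j<N. c n j * pReLU a (pu n j \<bullet> x + pv n j)) + e n"

lemma kink_coeff_pos: "kink_coeff > 0"
  using a_ne_1 by (simp add: kink_coeff_def)

lemma pReLU_eq: "pReLU a y = lin_coeff * y + kink_coeff * relu y"
  using pReLU_eq_linear_plus_relu[OF a_nonneg] by (simp add: lin_coeff_def kink_coeff_def)

lemma L_add_scaleR: "L k (y + t *\<^sub>R w) = L k y + t * (U k \<bullet> w)"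
  by (simp add: L_def inner_add_right algebra_simps)

definition sign_change :: "real ^ 'd \<Rightarrow> real ^ 'd \<Rightarrow> nat set" where
  "sign_change p q = {j\<in>{..<N}. L j p * L j q < 0}"

definition seg_kink :: "real ^ 'd \<Rightarrow> real ^ 'd \<Rightarrow> nat \<Rightarrow> real" where
  "seg_kink p q j = L j p / (L j p - L j q)"

definition seg_kink_seq :: "real ^ 'd \<Rightarrow> real ^ 'd \<Rightarrow> nat \<Rightarrow> nat \<Rightarrow> real" where
  "seg_kink_seq p q n j = (pu n j \<bullet> p + pv n j) / ((pu n j \<bullet> p + pv n j) - (pu n j \<bullet> q + pv n j))"

definition seg_weight :: "real ^ 'd \<Rightarrow> real ^ 'd \<Rightarrow> nat \<Rightarrow> nat \<Rightarrow> real" where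
  "seg_weight p q n j = kink_coeff * c n j * \<bar>pu n j \<bullet> (q - p)\<bar>"

lemma seg_kink_in_01:
  assumes "j \<in> sign_change p q"
  shows "0 < seg_kink p q j \<and> seg_kink p q j < 1"
proof -
  have "L j p * L j q < 0" using assms by (simp add: sign_change_def)
  then consider "L j p > 0" "L j q < 0" | "L j p < 0" "L j q > 0" by (auto simp: mult_less_0_iff)
  then show ?thesis by cases (simp_all add: seg_kink_def divide_less_eq zero_less_divide_iff)
qed

lemma eventually_sign_change_iff:
  assumes nonzero: "\<And>k. k < N \<Longrightarrow> L k p \<noteq> 0 \<and> L k q \<noteq> 0"
  shows "\<forall>\<^sub>F n in sequentially. \<forall>j<N.
           (pu n j \<bullet> p + pv n j) * (pu n j \<bullet> q + pv n j) < 0 \<longleftrightarrow> j \<in> sign_change p q"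
proof -
  have "\<forall>j\<in>{..<N}. \<forall>\<^sub>F n in sequentially.
          (pu n j \<bullet> p + pv n j) * L j p > 0 \<and> (pu n j \<bullet> q + pv n j) * L j q > 0"
  proof
    fix j assume j: "j \<in> {..<N}"
    have lim: "(\<lambda>n. (pu n j \<bullet> x + pv n j) * L j x) \<longlonglongrightarrow> L j x * L j x" for x
      using j unfolding L_def by (intro tendsto_intros pu_tendsto pv_tendsto) auto
    have "L j p * L j p > 0" "L j q * L j q > 0"
      using nonzero j by (auto simp: zero_less_mult_iff linorder_neq_iff)
    then show "\<forall>\<^sub>F n in sequentially. (pu n j \<bullet> p + pv n j) * L j p > 0 \<and> (pu n j \<bullet> q + pv n j) * L j q > 0"
      using order_tendstoD(1)[OF lim[of p]] order_tendstoD(1)[OF lim[of q]] by (simp add: eventually_conj)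
  qed
  then have "\<forall>\<^sub>F n in sequentially. \<forall>j\<in>{..<N}.
               (pu n j \<bullet> p + pv n j) * L j p > 0 \<and> (pu n j \<bullet> q + pv n j) * L j q > 0"
    by (rule eventually_ball_finite[OF finite_lessThan])
  then show ?thesis
  proof eventually_elim
    case (elim n)
    show ?case
    proof (intro allI impI)
      fix j assume j: "j < N"
      define P Q where "P = pu n j \<bullet> p + pv n j" and "Q = pu n j \<bullet> q + pv n j"
      have "P * L j p > 0" "Q * L j q > 0" using elim j by (auto simp: P_def Q_def)
      \<comment> \<open>Multiplying the two positive products, P * Q has the sign of L j p * L j q.\<close>
      then have "(P * Q) * (L j p * L j q) > 0"
        by (metis mult_pos_pos mult.assoc mult.left_commute)
      then have "P * Q < 0 \<longleftrightarrow> L j p * L j q < 0" by (rule mult_pos_imp_neg_iff)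
      then show "P * Q < 0 \<longleftrightarrow> j \<in> sign_change p q" using j by (simp add: sign_change_def)
    qed
  qed
qed

definition seg_affine_part :: "real ^ 'd \<Rightarrow> real ^ 'd \<Rightarrow> nat \<Rightarrow> nat \<Rightarrow> real \<Rightarrow> real" where
  "seg_affine_part p q n j s =
     c n j * (lin_coeff * ((1 - s) * (pu n j \<bullet> p + pv n j) + s * (pu n j \<bullet> q + pv n j))
              + kink_coeff * relu_chord (pu n j \<bullet> p + pv n j) (pu n j \<bullet> q + pv n j) s)"

lemma seg_affine_part_affine:
  "seg_affine_part p q n j s = seg_affine_part p q n j 0 + s * (seg_affine_part p q n j 1 - seg_affine_part p q n j 0)"
  unfolding seg_affine_part_def relu_chord_affine[of _ _ s] by (simp add: algebra_simps)

lemma neuron_on_segment: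
  assumes s: "0 \<le> s" "s \<le> 1"
    and sign: "(pu n j \<bullet> p + pv n j) * (pu n j \<bullet> q + pv n j) < 0 \<longleftrightarrow> j \<in> sign_change p q"
  shows "c n j * pReLU a (pu n j \<bullet> (p + s *\<^sub>R (q - p)) + pv n j) = seg_affine_part p q n j s +
           (if j \<in> sign_change p q then seg_weight p q n j * relu (s - seg_kink_seq p q n j) else 0)"
proof -
  define P Q where "P = pu n j \<bullet> p + pv n j" and "Q = pu n j \<bullet> q + pv n j"
  have "pu n j \<bullet> (p + s *\<^sub>R (q - p)) + pv n j = (1 - s) * P + s * Q"
    by (simp add: P_def Q_def inner_add_right inner_diff_right algebra_simps)
  moreover have "Q - P = pu n j \<bullet> (q - p)" by (simp add: P_def Q_def inner_diff_right)
  ultimately show ?thesis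
    using sign relu_eq_kink_plus_chord[OF s, of P Q]
    by (auto simp: pReLU_eq seg_affine_part_def seg_weight_def seg_kink_seq_def P_def Q_def algebra_simps)
qed

lemma eventually_F_on_segment:
  assumes nonzero: "\<And>k. k < N \<Longrightarrow> L k p \<noteq> 0 \<and> L k q \<noteq> 0"
  shows "\<forall>\<^sub>F n in sequentially. \<forall>s\<in>{0..1}. F n (p + s *\<^sub>R (q - p)) =
           (e n + (\<Sum>j<N. seg_affine_part p q n j 0)) + (\<Sum>j<N. seg_affine_part p q n j 1 - seg_affine_part p q n j 0) * s
           + (\<Sum>j\<in>sign_change p q. seg_weight p q n j * relu (s - seg_kink_seq p q n j))"
proof -
  have "\<forall>\<^sub>F n in sequentially. \<forall>j<N.
          (pu n j \<bullet> p + pv n j) * (pu n j \<bullet> q + pv n j) < 0 \<longleftrightarrow> j \<in> sign_change p q"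
    using nonzero by (intro eventually_sign_change_iff) auto
  then show ?thesis
  proof eventually_elim
    case (elim n)
    show ?case
    proof
      fix s :: real assume s: "s \<in> {0..1}"
      have "F n (p + s *\<^sub>R (q - p)) = (\<Sum>j<N. seg_affine_part p q n j s) +
          (\<Sum>j<N. if j \<in> sign_change p q then seg_weight p q n j * relu (s - seg_kink_seq p q n j) else 0) + e n"
        using neuron_on_segment[of s n _ p q] s elim by (simp add: F_def sum.distrib)
      also have "(\<Sum>j<N. if j \<in> sign_change p q then seg_weight p q n j * relu (s - seg_kink_seq p q n j) else 0) =
          (\<Sum>j\<in>sign_change p q. seg_weight p q n j * relu (s - seg_kink_seq p q n j))"
        by (simp add: sum.inter_filter[symmetric] sign_change_def)
      also have "(\<Sum>j<N. seg_affine_part p q n j s) =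
          (\<Sum>j<N. seg_affine_part p q n j 0) + s * (\<Sum>j<N. seg_affine_part p q n j 1 - seg_affine_part p q n j 0)"
        by (subst seg_affine_part_affine) (simp add: sum.distrib sum_distrib_left)
      finally show "F n (p + s *\<^sub>R (q - p)) =
          (e n + (\<Sum>j<N. seg_affine_part p q n j 0)) + (\<Sum>j<N. seg_affine_part p q n j 1 - seg_affine_part p q n j 0) * s
          + (\<Sum>j\<in>sign_change p q. seg_weight p q n j * relu (s - seg_kink_seq p q n j))"
        by (simp add: algebra_simps)
    qed
  qed
qed

lemma kinked_limit_on_segment:
  assumes p: "p \<in> cube B" and q: "q \<in> cube B"
    and nonzero: "\<And>k. k < N \<Longrightarrow> L k p \<noteq> 0 \<and> L k q \<noteq> 0"
  shows "\<exists>X Y. kinked_limit (sign_change p q) (seg_weight p q) (seg_kink_seq p q) (seg_kink p q)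
                 (\<lambda>n s. F n (p + s *\<^sub>R (q - p))) (\<lambda>s. g (p + s *\<^sub>R (q - p))) X Y"
proof -
  have seg: "p + s *\<^sub>R (q - p) \<in> cube B" if "s \<in> {0..1}" for s
    using that by (intro convex_add_scaleR_diff[OF convex_cube p q]) auto
  have "(\<lambda>n. seg_kink_seq p q n j) \<longlonglongrightarrow> seg_kink p q j" if j: "j \<in> sign_change p q" for j
  proof -
    have "j < N" "L j p - L j q \<noteq> 0" using j by (auto simp: sign_change_def)
    then show ?thesis unfolding seg_kink_seq_def seg_kink_def L_def
      by (intro tendsto_intros pu_tendsto pv_tendsto) auto
  qed
  moreover have "continuous_on {0..1} (\<lambda>s. g (p + s *\<^sub>R (q - p)))"
    by (rule continuous_on_compose2[OF continuous_g]) (auto intro!: continuous_intros seg)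
  ultimately have "kinked_limit (sign_change p q) (seg_weight p q) (seg_kink_seq p q) (seg_kink p q)
      (\<lambda>n s. F n (p + s *\<^sub>R (q - p))) (\<lambda>s. g (p + s *\<^sub>R (q - p)))
      (\<lambda>n. e n + (\<Sum>j<N. seg_affine_part p q n j 0)) (\<lambda>n. \<Sum>j<N. seg_affine_part p q n j 1 - seg_affine_part p q n j 0)"
    using seg_kink_in_01 seg tendsto_network eventually_F_on_segment[OF nonzero]
    by unfold_locales (auto simp: sign_change_def F_def)
  then show ?thesis by blast
qed

subsection \<open>Classes of limit hyperplanes\<close>

definition same_hyperplane :: "nat \<Rightarrow> nat \<Rightarrow> bool" where
  "same_hyperplane j k \<longleftrightarrow> (U k = U j \<and> V k = V j) \<or> (U k = - U j \<and> V k = - V j)"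

definition hyperplane_class :: "nat \<Rightarrow> nat set" where
  "hyperplane_class j = {k\<in>{..<N}. same_hyperplane j k}"

definition crosses_cube :: "nat \<Rightarrow> bool" where
  "crosses_cube j \<longleftrightarrow> (\<exists>x\<in>open_cube B. L j x = 0)"

definition exclusive_zero :: "nat \<Rightarrow> real ^ 'd \<Rightarrow> bool" where
  "exclusive_zero r x \<longleftrightarrow> x \<in> open_cube B \<and> L r x = 0 \<and> (\<forall>k<N. L k x = 0 \<longrightarrow> same_hyperplane r k)"

lemma same_hyperplane_refl: "same_hyperplane j j"
  by (simp add: same_hyperplane_def)

lemma same_hyperplane_sym: "same_hyperplane j k \<Longrightarrow> same_hyperplane k j"
  by (auto simp: same_hyperplane_def)

lemma same_hyperplane_trans: "same_hyperplane j k \<Longrightarrow> same_hyperplane k m \<Longrightarrow> same_hyperplane j m"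
  by (auto simp: same_hyperplane_def)

lemma same_hyperplane_L: "same_hyperplane j k \<Longrightarrow> (\<forall>x. L k x = L j x) \<or> (\<forall>x. L k x = - L j x)"
  by (auto simp: same_hyperplane_def L_def)

lemma V_nonzero_if_U_zero: "j < N \<Longrightarrow> U j = 0 \<Longrightarrow> V j \<noteq> 0"
  using unit[of j] by auto

lemma U_nonzero_if_crosses_cube: "j < N \<Longrightarrow> crosses_cube j \<Longrightarrow> U j \<noteq> 0"
  using V_nonzero_if_U_zero[of j] by (auto simp: crosses_cube_def L_def)

lemma eventually_off_hyperplanes:
  assumes "y \<in> open_cube B" "finite K" "\<And>k. k \<in> K \<Longrightarrow> L k y \<noteq> 0 \<or> U k \<bullet> w \<noteq> 0"
  shows "\<forall>\<^sub>F t in at_right 0. y + t *\<^sub>R w \<in> open_cube B \<and> (\<forall>k\<in>K. L k (y + t *\<^sub>R w) \<noteq> 0)"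
proof -
  have "\<forall>k\<in>K. \<forall>\<^sub>F t in at_right 0. L k (y + t *\<^sub>R w) \<noteq> 0"
    using assms(3) eventually_at_right_affine_ne_0 by (simp add: L_add_scaleR)
  then have "\<forall>\<^sub>F t in at_right 0. \<forall>k\<in>K. L k (y + t *\<^sub>R w) \<noteq> 0"
    by (rule eventually_ball_finite[OF assms(2)])
  moreover have "\<forall>\<^sub>F t in at_right 0. y + t *\<^sub>R w \<in> open_cube B"
    by (rule eventually_at_right_ray_in_open[OF open_open_cube assms(1)])
  ultimately show ?thesis by eventually_elim simp
qed

lemma same_hyperplane_if_parallel:
  assumes "k < N" "r < N" "U k = \<mu> *\<^sub>R U r" "L k x = 0" "L r x = 0"
  shows "same_hyperplane r k"
proof -
  have "\<mu> * (U r \<bullet> x) + V k = 0" "U r \<bullet> x + V r = 0" using assms(3-5) by (simp_all add: L_def)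
  then have "V k = - (\<mu> * (U r \<bullet> x))" "U r \<bullet> x = - V r" by linarith+
  then have Vk: "V k = \<mu> * V r" by simp
  have "norm (U k) ^ 2 + V k ^ 2 = \<mu> ^ 2 * (norm (U r) ^ 2 + V r ^ 2)"
    by (simp add: assms(3) Vk power_mult_distrib algebra_simps)
  then have "\<mu> ^ 2 = 1" using unit[OF assms(1)] unit[OF assms(2)] by simp
  then have "\<mu> = 1 \<or> \<mu> = -1" by (simp add: power2_eq_1_iff)
  then show ?thesis using assms(3) Vk by (auto simp: same_hyperplane_def)
qed

lemma exclusive_zero_exists:
  assumes r: "r < N" "crosses_cube r"
  shows "\<exists>x. exclusive_zero r x"
proof -
  obtain x1 where x1: "x1 \<in> open_cube B" "L r x1 = 0" using r by (auto simp: crosses_cube_def)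
  have Ur: "U r \<bullet> U r \<noteq> 0" using U_nonzero_if_crosses_cube[OF r] by simp
  define perp where "perp k = U k - ((U k \<bullet> U r) / (U r \<bullet> U r)) *\<^sub>R U r" for k
  define K where "K = {k. k < N \<and> perp k \<noteq> 0}"
  \<comment> \<open>Slide along the hyperplane of r in a direction that leaves all non-parallel hyperplanes.\<close>
  have perp_orth: "U r \<bullet> perp k = 0" for k
    using Ur by (simp add: perp_def inner_diff_right inner_commute[of "U r" "U k"])
  have "finite K" using finite_subset[of K "{..<N}"] unfolding K_def by blast
  then have "finite (perp ` K)" by (rule finite_imageI)
  moreover have "\<forall>a\<in>perp ` K. a \<noteq> 0 \<and> U r \<bullet> a = 0"
  proof
    fix a assume "a \<in> perp ` K"
    then obtain k where k: "k \<in> K" and a: "a = perp k" by blast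
    have "perp k \<noteq> 0" using k unfolding K_def by blast
    then show "a \<noteq> 0 \<and> U r \<bullet> a = 0" unfolding a using perp_orth[of k] by blast
  qed
  ultimately obtain w where w: "U r \<bullet> w = 0" "\<forall>a\<in>perp ` K. a \<bullet> w \<noteq> 0"
    by (blast dest: exists_orthogonal_avoiding_hyperplanes)
  have "U k \<bullet> w \<noteq> 0" if "k \<in> K" for k
  proof -
    have "perp k \<bullet> w \<noteq> 0" using w(2) that by blast
    moreover have "U k \<bullet> w = perp k \<bullet> w" using w(1) by (simp add: perp_def inner_diff_left)
    ultimately show ?thesis by simp
  qed
  then have "\<forall>\<^sub>F t in at_right 0. x1 + t *\<^sub>R w \<in> open_cube B \<and> (\<forall>k\<in>K. L k (x1 + t *\<^sub>R w) \<noteq> 0)"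
    using eventually_off_hyperplanes[OF x1(1) \<open>finite K\<close>] by blast
  then obtain t where t: "x1 + t *\<^sub>R w \<in> open_cube B" "\<forall>k\<in>K. L k (x1 + t *\<^sub>R w) \<noteq> 0"
    using eventually_happens' trivial_limit_at_right_real by blast
  define x0 where "x0 = x1 + t *\<^sub>R w"
  have "same_hyperplane r k" if k: "k < N" "L k x0 = 0" for k
  proof -
    have "k \<notin> K" using t k unfolding x0_def by blast
    then have "perp k = 0" using k unfolding K_def by blast
    then have Uk: "U k = ((U k \<bullet> U r) / (U r \<bullet> U r)) *\<^sub>R U r" unfolding perp_def right_minus_eq .
    then have "U k \<bullet> w = 0" using w(1) by (metis inner_scaleR_left mult_zero_right)
    then have "L k x1 = 0" using k by (simp add: x0_def L_add_scaleR)
    then show ?thesis using same_hyperplane_if_parallel[OF k(1) r(1) Uk] x1(2) by blast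
  qed
  then have "exclusive_zero r x0" using t x1 w by (auto simp: exclusive_zero_def x0_def L_add_scaleR)
  then show ?thesis by blast
qed

lemma exclusive_zero_perturb:
  assumes "exclusive_zero r x" "U r \<bullet> w = 0"
  shows "\<exists>t>0. exclusive_zero r (x + t *\<^sub>R w)"
proof -
  define K where "K = {k. k < N \<and> L k x \<noteq> 0}"
  have "x \<in> open_cube B" using assms(1) by (simp add: exclusive_zero_def)
  moreover have "finite K" using finite_subset[of K "{..<N}"] unfolding K_def by blast
  ultimately have "\<forall>\<^sub>F t in at_right 0. x + t *\<^sub>R w \<in> open_cube B \<and> (\<forall>k\<in>K. L k (x + t *\<^sub>R w) \<noteq> 0)"
    by (rule eventually_off_hyperplanes) (simp add: K_def)
  then obtain t where t: "t > 0" "x + t *\<^sub>R w \<in> open_cube B" "\<forall>k\<in>K. L k (x + t *\<^sub>R w) \<noteq> 0"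
    using eventually_happens'[OF trivial_limit_at_right_real eventually_conj[OF eventually_at_right_less]]
    by blast
  then have "exclusive_zero r (x + t *\<^sub>R w)"
    using assms by (auto simp: exclusive_zero_def K_def L_add_scaleR)
  then show ?thesis using t by blast
qed

lemma closure_generic_points: "closure {y\<in>open_cube B. \<forall>k<N. L k y \<noteq> 0} = cube B"
  (is "closure ?G = _")
proof
  show "closure ?G \<subseteq> cube B"
    by (rule closure_minimal[OF _ closed_cube]) (use open_cube_subset_cube in blast)
next
  have "finite {k. k < N \<and> U k \<noteq> 0}" by (rule finite_subset[of _ "{..<N}"]) auto
  then have "finite (U ` {k. k < N \<and> U k \<noteq> 0})" by (rule finite_imageI)
  moreover have "\<forall>a\<in>U ` {k. k < N \<and> U k \<noteq> 0}. a \<noteq> 0 \<and> 0 \<bullet> a = 0" by auto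
  ultimately obtain w where w: "\<forall>a\<in>U ` {k. k < N \<and> U k \<noteq> 0}. a \<bullet> w \<noteq> 0"
    by (blast dest: exists_orthogonal_avoiding_hyperplanes)
  have "y \<in> closure ?G" if y: "y \<in> open_cube B" for y
  proof -
    have "L k y \<noteq> 0 \<or> U k \<bullet> w \<noteq> 0" if "k \<in> {..<N}" for k
      using w V_nonzero_if_U_zero[of k] that by (cases "U k = 0") (auto simp: L_def)
    then have "\<forall>\<^sub>F t in at_right 0. y + t *\<^sub>R w \<in> open_cube B \<and> (\<forall>k\<in>{..<N}. L k (y + t *\<^sub>R w) \<noteq> 0)"
      by (intro eventually_off_hyperplanes y finite_lessThan)
    then have ev: "\<forall>\<^sub>F t in at_right 0. y + t *\<^sub>R w \<in> closure ?G"
      by eventually_elim (rule closure_subset[THEN subsetD], simp)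
    have "((\<lambda>t. y + t *\<^sub>R w) \<longlongrightarrow> y + 0 *\<^sub>R w) (at_right 0)" by (intro tendsto_intros)
    then show ?thesis
      using Lim_in_closed_set[OF closed_closure ev trivial_limit_at_right_real] by simp
  qed
  then have "closure (open_cube B) \<subseteq> closure ?G" by (intro closure_minimal subsetI) auto
  then show "cube B \<subseteq> closure ?G" unfolding closure_open_cube[OF B_pos] .
qed

definition orient :: "nat \<Rightarrow> nat \<Rightarrow> real" where
  "orient r j = (if U j = U r \<and> V j = V r then 1 else -1)"

definition class_dir :: "nat \<Rightarrow> nat \<Rightarrow> real ^ 'd" where
  "class_dir r n = (\<Sum>j\<in>hyperplane_class r. (c n j * orient r j) *\<^sub>R pu n j)"

definition class_aff :: "nat \<Rightarrow> nat \<Rightarrow> real ^ 'd \<Rightarrow> real" where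
  "class_aff r n y = (\<Sum>j\<in>hyperplane_class r. c n j * orient r j * (pu n j \<bullet> y + pv n j))"

lemma finite_hyperplane_class: "finite (hyperplane_class r)"
  by (simp add: hyperplane_class_def)

lemma orient_class:
  assumes "j \<in> hyperplane_class r"
  shows "U j = orient r j *\<^sub>R U r" "V j = orient r j * V r" "orient r j = 1 \<or> orient r j = -1"
  using assms by (auto simp: orient_def hyperplane_class_def same_hyperplane_def)

lemma L_class: "j \<in> hyperplane_class r \<Longrightarrow> L j x = orient r j * L r x"
  using orient_class[of j r] by (simp add: L_def algebra_simps)

lemma inner_class_dir: "class_dir r n \<bullet> v = (\<Sum>j\<in>hyperplane_class r. c n j * orient r j * (pu n j \<bullet> v))"
  by (simp add: class_dir_def inner_sum_left)

lemma class_aff_add_scaleR: "class_aff r n (y + t *\<^sub>R v) = class_aff r n y + t * (class_dir r n \<bullet> v)"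
  unfolding class_aff_def inner_class_dir sum_distrib_left sum.distrib[symmetric]
  by (rule sum.cong) (simp_all add: inner_add_right algebra_simps)

lemma eventually_abs_inner_class:
  assumes v: "U r \<bullet> v \<noteq> 0"
  shows "\<forall>\<^sub>F n in sequentially. \<forall>j\<in>hyperplane_class r.
           \<bar>pu n j \<bullet> v\<bar> = sgn (U r \<bullet> v) * orient r j * (pu n j \<bullet> v) \<and> pu n j \<bullet> v \<noteq> 0"
proof -
  \<comment> \<open>pu n j \<bullet> v eventually has the sign of its limit orient r j * (U r \<bullet> v).\<close>
  have "\<forall>j\<in>hyperplane_class r. \<forall>\<^sub>F n in sequentially. (pu n j \<bullet> v) * (orient r j * (U r \<bullet> v)) > 0"
  proof
    fix j assume j: "j \<in> hyperplane_class r"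
    have "(\<lambda>n. (pu n j \<bullet> v) * (orient r j * (U r \<bullet> v))) \<longlonglongrightarrow> (U j \<bullet> v) * (orient r j * (U r \<bullet> v))"
      using j by (intro tendsto_intros pu_tendsto) (simp add: hyperplane_class_def)
    moreover have "(U j \<bullet> v) * (orient r j * (U r \<bullet> v)) = (orient r j * (U r \<bullet> v))\<^sup>2"
      using orient_class(1)[OF j] by (simp add: power2_eq_square)
    moreover have "orient r j * (U r \<bullet> v) \<noteq> 0" using orient_class(3)[OF j] v by auto
    ultimately show "\<forall>\<^sub>F n in sequentially. (pu n j \<bullet> v) * (orient r j * (U r \<bullet> v)) > 0"
      by (simp add: order_tendstoD(1))
  qed
  then have "\<forall>\<^sub>F n in sequentially. \<forall>j\<in>hyperplane_class r. (pu n j \<bullet> v) * (orient r j * (U r \<bullet> v)) > 0"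
    by (rule eventually_ball_finite[OF finite_hyperplane_class])
  then show ?thesis
    by eventually_elim (use orient_class(3) in \<open>fastforce simp: zero_less_mult_iff sgn_real_def\<close>)
qed

lemma exists_symmetric_generic_segment:
  assumes y: "exclusive_zero r y" and v: "U r \<bullet> v \<noteq> 0"
  shows "\<exists>\<epsilon>>0. y - \<epsilon> *\<^sub>R v \<in> open_cube B \<and> y + \<epsilon> *\<^sub>R v \<in> open_cube B \<and>
                (\<forall>k<N. L k (y - \<epsilon> *\<^sub>R v) \<noteq> 0 \<and> L k (y + \<epsilon> *\<^sub>R v) \<noteq> 0)"
proof -
  have y_in: "y \<in> open_cube B" using y by (simp add: exclusive_zero_def)
  \<comment> \<open>Only the class of r vanishes at y, and it is transversal to v.\<close>
  have transversal: "L k y \<noteq> 0 \<or> U k \<bullet> u \<noteq> 0" if "k \<in> {..<N}" "u = v \<or> u = - v" for k u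
  proof (cases "L k y = 0")
    case True
    then have "same_hyperplane r k" using y that by (simp add: exclusive_zero_def)
    then have "U k = U r \<or> U k = - U r" by (auto simp: same_hyperplane_def)
    then show ?thesis using v that(2) by auto
  qed simp
  have ev: "\<forall>\<^sub>F t in at_right 0. y + t *\<^sub>R u \<in> open_cube B \<and> (\<forall>k\<in>{..<N}. L k (y + t *\<^sub>R u) \<noteq> 0)"
    if "u = v \<or> u = - v" for u
    using transversal that by (intro eventually_off_hyperplanes y_in) auto
  have "\<forall>\<^sub>F t in at_right 0. (y + t *\<^sub>R v \<in> open_cube B \<and> (\<forall>k\<in>{..<N}. L k (y + t *\<^sub>R v) \<noteq> 0)) \<and>
      (y + t *\<^sub>R (- v) \<in> open_cube B \<and> (\<forall>k\<in>{..<N}. L k (y + t *\<^sub>R (- v)) \<noteq> 0)) \<and> t > 0"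
    using eventually_conj[OF ev[of v] eventually_conj[OF ev[of "- v"] eventually_at_right_less]] by simp
  then obtain \<epsilon> where "(y + \<epsilon> *\<^sub>R v \<in> open_cube B \<and> (\<forall>k\<in>{..<N}. L k (y + \<epsilon> *\<^sub>R v) \<noteq> 0)) \<and>
      (y + \<epsilon> *\<^sub>R (- v) \<in> open_cube B \<and> (\<forall>k\<in>{..<N}. L k (y + \<epsilon> *\<^sub>R (- v)) \<noteq> 0)) \<and> \<epsilon> > 0"
    using eventually_happens'[OF trivial_limit_at_right_real] by blast
  then show ?thesis by (intro exI[of _ \<epsilon>]) auto
qed

lemma symmetric_segment_half_kinks:
  assumes y: "exclusive_zero r y" and v: "U r \<bullet> v \<noteq> 0" and \<epsilon>: "\<epsilon> > 0"
  defines "p \<equiv> y - \<epsilon> *\<^sub>R v" and "q \<equiv> y + \<epsilon> *\<^sub>R v"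
  shows "{j\<in>sign_change p q. seg_kink p q j = 1/2} = hyperplane_class r"
proof -
  have Lp: "L j p = L j y - \<epsilon> * (U j \<bullet> v)" and Lq: "L j q = L j y + \<epsilon> * (U j \<bullet> v)" for j
    by (simp_all add: p_def q_def L_def inner_diff_right inner_add_right algebra_simps)
  have Ly: "L r y = 0" using y by (simp add: exclusive_zero_def)
  show ?thesis
  proof
    show "hyperplane_class r \<subseteq> {j\<in>sign_change p q. seg_kink p q j = 1/2}"
    proof
      fix j assume j: "j \<in> hyperplane_class r"
      define z where "z = \<epsilon> * (orient r j * (U r \<bullet> v))"
      have "z \<noteq> 0" using \<epsilon> v orient_class(3)[OF j] by (auto simp: z_def)
      moreover have "L j p = - z" "L j q = z"
        using Lp[of j] Lq[of j] L_class[OF j, of y] Ly orient_class(1)[OF j] by (simp_all add: z_def)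
      ultimately show "j \<in> {j\<in>sign_change p q. seg_kink p q j = 1/2}"
        using j by (auto simp: sign_change_def seg_kink_def hyperplane_class_def zero_less_mult_iff)
    qed
    show "{j\<in>sign_change p q. seg_kink p q j = 1/2} \<subseteq> hyperplane_class r"
    proof
      fix j assume j: "j \<in> {j\<in>sign_change p q. seg_kink p q j = 1/2}"
      then have "j < N" "L j p * L j q < 0" "L j p / (L j p - L j q) = 1/2"
        by (auto simp: sign_change_def seg_kink_def)
      moreover from this(2) have "L j p - L j q \<noteq> 0" by auto
      ultimately have "L j p + L j q = 0" by (simp add: field_simps)
      then have "L j y = 0" using Lp Lq by simp
      then show "j \<in> hyperplane_class r"
        using y \<open>j < N\<close> by (simp add: exclusive_zero_def hyperplane_class_def)
    qed
  qed
qed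

lemma eventually_class_seg_sums:
  fixes y :: "real ^ 'd"
  assumes v: "U r \<bullet> v \<noteq> 0" and \<epsilon>: "\<epsilon> > 0"
  defines "p \<equiv> y - \<epsilon> *\<^sub>R v" and "q \<equiv> y + \<epsilon> *\<^sub>R v" and "\<sigma> \<equiv> sgn (U r \<bullet> v)"
  shows "\<forall>\<^sub>F n in sequentially.
           (\<Sum>j\<in>hyperplane_class r. seg_weight p q n j) = kink_coeff * (2 * \<epsilon>) * \<sigma> * (class_dir r n \<bullet> v) \<and>
           (\<Sum>j\<in>hyperplane_class r. seg_weight p q n j * seg_kink_seq p q n j) = - (kink_coeff * \<sigma>) * class_aff r n p"
  using eventually_abs_inner_class[OF v]
proof eventually_elim
  case (elim n)
  have "q - p = \<epsilon> *\<^sub>R v + \<epsilon> *\<^sub>R v" by (simp add: p_def q_def)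
  then have qp: "q - p = (2 * \<epsilon>) *\<^sub>R v" by (metis scaleR_left_distrib mult_2)
  have summand: "seg_weight p q n j = kink_coeff * (2 * \<epsilon>) * \<sigma> * (c n j * orient r j * (pu n j \<bullet> v))
        \<and> seg_weight p q n j * seg_kink_seq p q n j = - (kink_coeff * \<sigma>) * (c n j * orient r j * (pu n j \<bullet> p + pv n j))"
    if j: "j \<in> hyperplane_class r" for j
  proof -
    have abs: "\<bar>pu n j \<bullet> (q - p)\<bar> = 2 * \<epsilon> * (\<sigma> * orient r j * (pu n j \<bullet> v))"
      using elim j \<epsilon> by (simp add: qp abs_mult \<sigma>_def)
    have "(pu n j \<bullet> p + pv n j) - (pu n j \<bullet> q + pv n j) = - (pu n j \<bullet> (q - p))"
      by (simp add: inner_diff_right)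
    also have "\<dots> = - (2 * \<epsilon> * (pu n j \<bullet> v))" by (simp add: qp)
    finally have den: "(pu n j \<bullet> p + pv n j) - (pu n j \<bullet> q + pv n j) = - (2 * \<epsilon> * (pu n j \<bullet> v))" .
    have kink: "seg_kink_seq p q n j = (pu n j \<bullet> p + pv n j) / - (2 * \<epsilon> * (pu n j \<bullet> v))"
      by (simp only: seg_kink_seq_def den)
    have weight: "seg_weight p q n j = kink_coeff * (2 * \<epsilon>) * \<sigma> * (c n j * orient r j * (pu n j \<bullet> v))"
      unfolding seg_weight_def abs by (simp add: ac_simps)
    have "pu n j \<bullet> v \<noteq> 0" using elim j by blast
    then show ?thesis using \<epsilon> unfolding kink weight by (simp add: field_simps)
  qed
  have "(\<Sum>j\<in>hyperplane_class r. seg_weight p q n j) =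
        (\<Sum>j\<in>hyperplane_class r. kink_coeff * (2 * \<epsilon>) * \<sigma> * (c n j * orient r j * (pu n j \<bullet> v)))"
    by (rule sum.cong[OF refl]) (rule conjunct1[OF summand])
  moreover have "(\<Sum>j\<in>hyperplane_class r. seg_weight p q n j * seg_kink_seq p q n j) =
        (\<Sum>j\<in>hyperplane_class r. - (kink_coeff * \<sigma>) * (c n j * orient r j * (pu n j \<bullet> p + pv n j)))"
    by (rule sum.cong[OF refl]) (rule conjunct2[OF summand])
  ultimately show ?case
    by (simp add: sum_negf sum_distrib_left[symmetric] inner_class_dir class_aff_def)
qed

lemma exclusive_zero_limits:
  assumes y: "exclusive_zero r y" and v: "U r \<bullet> v \<noteq> 0"
  shows "convergent (\<lambda>n. class_dir r n \<bullet> v)" and "(\<lambda>n. class_aff r n y) \<longlonglongrightarrow> 0"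
proof -
  obtain \<epsilon> where \<epsilon>: "\<epsilon> > 0" and pq: "y - \<epsilon> *\<^sub>R v \<in> open_cube B" "y + \<epsilon> *\<^sub>R v \<in> open_cube B"
    and nonzero: "\<forall>k<N. L k (y - \<epsilon> *\<^sub>R v) \<noteq> 0 \<and> L k (y + \<epsilon> *\<^sub>R v) \<noteq> 0"
    using exists_symmetric_generic_segment[OF y v] by blast
  define p q where "p = y - \<epsilon> *\<^sub>R v" and "q = y + \<epsilon> *\<^sub>R v"
  define \<sigma> where "\<sigma> = sgn (U r \<bullet> v)"
  obtain X Y where "kinked_limit (sign_change p q) (seg_weight p q) (seg_kink_seq p q) (seg_kink p q)
      (\<lambda>n s. F n (p + s *\<^sub>R (q - p))) (\<lambda>s. g (p + s *\<^sub>R (q - p))) X Y"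
    using kinked_limit_on_segment[of p q] pq nonzero open_cube_subset_cube unfolding p_def q_def by blast
  then interpret K: kinked_limit "sign_change p q" "seg_weight p q" "seg_kink_seq p q" "seg_kink p q"
      "\<lambda>n s. F n (p + s *\<^sub>R (q - p))" "\<lambda>s. g (p + s *\<^sub>R (q - p))" X Y .
  \<comment> \<open>The kink of the whole class of r sits at the midpoint y of the segment.\<close>
  have half: "{j\<in>sign_change p q. seg_kink p q j = 1/2} = hyperplane_class r"
    using symmetric_segment_half_kinks[OF y v \<epsilon>] by (simp add: p_def q_def)
  have sums: "\<forall>\<^sub>F n in sequentially.
      (\<Sum>j\<in>hyperplane_class r. seg_weight p q n j) = kink_coeff * (2 * \<epsilon>) * \<sigma> * (class_dir r n \<bullet> v) \<and>
      (\<Sum>j\<in>hyperplane_class r. seg_weight p q n j * seg_kink_seq p q n j) = - (kink_coeff * \<sigma>) * class_aff r n p"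
    using eventually_class_seg_sums[OF v \<epsilon>] by (simp add: p_def q_def \<sigma>_def)
  have \<sigma>: "\<sigma> \<noteq> 0" using v by (simp add: \<sigma>_def sgn_real_def)
  have c1: "kink_coeff * (2 * \<epsilon>) * \<sigma> \<noteq> 0" "kink_coeff * \<sigma> \<noteq> 0" using kink_coeff_pos \<epsilon> \<sigma> by auto
  have "(\<lambda>n. kink_coeff * (2 * \<epsilon>) * \<sigma> * (class_dir r n \<bullet> v)) \<longlonglongrightarrow> K.kink_weight (1/2)"
    using K.tendsto_kink_weight(1)[of "1/2", unfolded half] eventually_mono[OF sums conjunct1]
    by (rule Lim_transform_eventually)
  then have dir: "(\<lambda>n. class_dir r n \<bullet> v) \<longlonglongrightarrow> K.kink_weight (1/2) / (kink_coeff * (2 * \<epsilon>) * \<sigma>)"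
    using c1 by (auto dest: tendsto_divide[OF _ tendsto_const, of _ _ _ "kink_coeff * (2 * \<epsilon>) * \<sigma>"])
  then show "convergent (\<lambda>n. class_dir r n \<bullet> v)" by (auto simp: convergent_def)
  have "(\<lambda>n. - (kink_coeff * \<sigma>) * class_aff r n p) \<longlonglongrightarrow> K.kink_weight (1/2) * (1/2)"
    using K.tendsto_kink_weight(2)[of "1/2", unfolded half] eventually_mono[OF sums conjunct2]
    by (rule Lim_transform_eventually)
  then have aff: "(\<lambda>n. class_aff r n p) \<longlonglongrightarrow> K.kink_weight (1/2) * (1/2) / - (kink_coeff * \<sigma>)"
    using c1 by (auto dest: tendsto_divide[OF _ tendsto_const, of _ _ _ "- (kink_coeff * \<sigma>)"])
  have "class_aff r n y = class_aff r n p + \<epsilon> * (class_dir r n \<bullet> v)" for n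
    using class_aff_add_scaleR[of r n p \<epsilon> v] by (simp add: p_def)
  moreover have "(\<lambda>n. class_aff r n p + \<epsilon> * (class_dir r n \<bullet> v)) \<longlonglongrightarrow>
      K.kink_weight (1/2) * (1/2) / - (kink_coeff * \<sigma>) + \<epsilon> * (K.kink_weight (1/2) / (kink_coeff * (2 * \<epsilon>) * \<sigma>))"
    by (intro tendsto_intros aff dir)
  moreover have "K.kink_weight (1/2) * (1/2) / - (kink_coeff * \<sigma>) + \<epsilon> * (K.kink_weight (1/2) / (kink_coeff * (2 * \<epsilon>) * \<sigma>)) = 0"
    using c1 \<epsilon> by (simp add: field_simps)
  ultimately show "(\<lambda>n. class_aff r n y) \<longlonglongrightarrow> 0" by simp
qed

lemma convergent_class_dir:
  assumes r: "r < N" "crosses_cube r"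
  shows "convergent (\<lambda>n. class_dir r n \<bullet> v)"
proof -
  obtain y where y: "exclusive_zero r y" using exclusive_zero_exists[OF r] by blast
  have Ur: "U r \<bullet> U r \<noteq> 0" using U_nonzero_if_crosses_cube[OF r] by simp
  show ?thesis
  proof (cases "U r \<bullet> v = 0")
    case False
    then show ?thesis by (rule exclusive_zero_limits(1)[OF y])
  next
    case True
    then have "U r \<bullet> (v + U r) \<noteq> 0" using Ur by (simp add: inner_add_right)
    from convergent_diff[OF exclusive_zero_limits(1)[OF y this] exclusive_zero_limits(1)[OF y Ur]]
    have "convergent (\<lambda>n. class_dir r n \<bullet> (v + U r) - class_dir r n \<bullet> U r)" .
    then show ?thesis by (simp add: inner_add_right)
  qed
qed

lemma lim_class_dir_orthogonal:
  assumes r: "r < N" "crosses_cube r" and w: "U r \<bullet> w = 0"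
  shows "lim (\<lambda>n. class_dir r n \<bullet> w) = 0"
proof -
  obtain y where y: "exclusive_zero r y" using exclusive_zero_exists[OF r] by blast
  obtain t where t: "t > 0" "exclusive_zero r (y + t *\<^sub>R w)" using exclusive_zero_perturb[OF y w] by blast
  have Ur: "U r \<bullet> U r \<noteq> 0" using U_nonzero_if_crosses_cube[OF r] by simp
  \<comment> \<open>class_aff vanishes in the limit at both exclusive zeros, and they differ by t * class_dir \<bullet> w.\<close>
  have "(\<lambda>n. class_aff r n (y + t *\<^sub>R w) - class_aff r n y) \<longlonglongrightarrow> 0 - 0"
    by (intro tendsto_diff exclusive_zero_limits(2)[OF t(2) Ur] exclusive_zero_limits(2)[OF y Ur])
  then have "(\<lambda>n. t * (class_dir r n \<bullet> w)) \<longlonglongrightarrow> 0" by (simp add: class_aff_add_scaleR)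
  moreover have "(\<lambda>n. t * (class_dir r n \<bullet> w)) \<longlonglongrightarrow> t * lim (\<lambda>n. class_dir r n \<bullet> w)"
    using convergent_class_dir[OF r] by (intro tendsto_mult_left) (simp add: convergent_LIMSEQ_iff)
  ultimately show ?thesis using t(1) LIMSEQ_unique by fastforce
qed

definition class_weight :: "nat \<Rightarrow> real" where
  "class_weight r = lim (\<lambda>n. class_dir r n \<bullet> U r) / (U r \<bullet> U r)"

lemma tendsto_class_sum:
  assumes r: "r < N" "crosses_cube r" and v: "U r \<bullet> v \<noteq> 0"
  shows "(\<lambda>n. \<Sum>j\<in>hyperplane_class r. c n j * \<bar>pu n j \<bullet> v\<bar>) \<longlonglongrightarrow> class_weight r * \<bar>U r \<bullet> v\<bar>"
proof -
  have Ur: "U r \<bullet> U r \<noteq> 0" using U_nonzero_if_crosses_cube[OF r] by simp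
  define \<mu> where "\<mu> = (U r \<bullet> v) / (U r \<bullet> U r)"
  define w where "w = v - \<mu> *\<^sub>R U r"
  have w: "U r \<bullet> w = 0" using Ur by (simp add: w_def \<mu>_def inner_diff_right)
  have "class_dir r n \<bullet> v = class_dir r n \<bullet> w + \<mu> * (class_dir r n \<bullet> U r)" for n
    by (simp add: w_def inner_diff_right)
  moreover have "(\<lambda>n. class_dir r n \<bullet> w + \<mu> * (class_dir r n \<bullet> U r)) \<longlonglongrightarrow>
      lim (\<lambda>n. class_dir r n \<bullet> w) + \<mu> * lim (\<lambda>n. class_dir r n \<bullet> U r)"
    using convergent_class_dir[OF r] by (intro tendsto_intros) (simp_all add: convergent_LIMSEQ_iff)
  moreover have "lim (\<lambda>n. class_dir r n \<bullet> w) + \<mu> * lim (\<lambda>n. class_dir r n \<bullet> U r) = (U r \<bullet> v) * class_weight r"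
    using lim_class_dir_orthogonal[OF r w] Ur by (simp add: \<mu>_def class_weight_def)
  ultimately have "(\<lambda>n. sgn (U r \<bullet> v) * (class_dir r n \<bullet> v)) \<longlonglongrightarrow> sgn (U r \<bullet> v) * ((U r \<bullet> v) * class_weight r)"
    by (intro tendsto_mult_left) simp
  also have "sgn (U r \<bullet> v) * ((U r \<bullet> v) * class_weight r) = class_weight r * \<bar>U r \<bullet> v\<bar>"
    by (auto simp: sgn_real_def)
  finally have lim: "(\<lambda>n. sgn (U r \<bullet> v) * (class_dir r n \<bullet> v)) \<longlonglongrightarrow> class_weight r * \<bar>U r \<bullet> v\<bar>" .
  have "\<forall>\<^sub>F n in sequentially.
      sgn (U r \<bullet> v) * (class_dir r n \<bullet> v) = (\<Sum>j\<in>hyperplane_class r. c n j * \<bar>pu n j \<bullet> v\<bar>)"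
    using eventually_abs_inner_class[OF v]
  proof eventually_elim
    case (elim n)
    then have "(\<Sum>j\<in>hyperplane_class r. c n j * \<bar>pu n j \<bullet> v\<bar>) =
        (\<Sum>j\<in>hyperplane_class r. sgn (U r \<bullet> v) * (c n j * orient r j * (pu n j \<bullet> v)))"
      by (intro sum.cong) auto
    then show ?case by (simp add: inner_class_dir sum_distrib_left)
  qed
  with lim show ?thesis by (rule Lim_transform_eventually)
qed

subsection \<open>The limit modulo its kinks\<close>

definition class_reps :: "nat set" where
  "class_reps = {r. r < N \<and> crosses_cube r \<and> (\<forall>k<r. \<not> same_hyperplane r k)}"

definition class_rep :: "nat \<Rightarrow> nat" where
  "class_rep j = (LEAST k. same_hyperplane j k)"

lemma class_reps_subset: "class_reps \<subseteq> {..<N}"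
  by (auto simp: class_reps_def)

lemma finite_class_reps: "finite class_reps"
  using class_reps_subset by (rule finite_subset) simp

lemma same_hyperplane_class_rep: "same_hyperplane j (class_rep j)"
  unfolding class_rep_def by (rule LeastI[of "same_hyperplane j" j]) (rule same_hyperplane_refl)

lemma class_rep_le: "class_rep j \<le> j"
  unfolding class_rep_def by (rule Least_le) (rule same_hyperplane_refl)

lemma class_rep_eq:
  assumes "same_hyperplane j k"
  shows "class_rep j = class_rep k"
proof -
  have "same_hyperplane j = same_hyperplane k"
    using assms same_hyperplane_sym same_hyperplane_trans by (intro ext) blast
  then show ?thesis by (simp add: class_rep_def)
qed

lemma crosses_cube_same_hyperplane: "same_hyperplane j k \<Longrightarrow> crosses_cube j \<Longrightarrow> crosses_cube k"
  unfolding crosses_cube_def using same_hyperplane_L[of j k] by auto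

lemma class_rep_in_class_reps:
  assumes "j < N" "crosses_cube j"
  shows "class_rep j \<in> class_reps"
proof -
  have "\<not> same_hyperplane (class_rep j) k" if "k < class_rep j" for k
    using not_less_Least[OF that[unfolded class_rep_def]] same_hyperplane_class_rep[of j]
      same_hyperplane_trans by blast
  then show ?thesis
    using assms class_rep_le[of j] crosses_cube_same_hyperplane[OF same_hyperplane_class_rep assms(2)]
    by (auto simp: class_reps_def)
qed

lemma class_rep_of_class_reps: "r \<in> class_reps \<Longrightarrow> class_rep r = r"
  using class_rep_le[of r] same_hyperplane_class_rep[of r]
  by (fastforce simp: class_reps_def order.order_iff_strict)

lemma L_segment: "L j (p + s *\<^sub>R (q - p)) = (1 - s) * L j p + s * L j q"
  by (simp add: L_def inner_add_right inner_diff_right algebra_simps)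

lemma sign_change_inner_ne_0: "j \<in> sign_change p q \<Longrightarrow> U j \<bullet> (q - p) \<noteq> 0"
  by (auto simp: sign_change_def L_def inner_diff_right mult_less_0_iff)

lemma crosses_cube_if_sign_change:
  assumes "p \<in> open_cube B" "q \<in> open_cube B" "j \<in> sign_change p q"
  shows "crosses_cube j"
proof -
  have "p + seg_kink p q j *\<^sub>R (q - p) \<in> open_cube B"
    using seg_kink_in_01[OF assms(3)] assms(1,2) by (intro convex_add_scaleR_diff convex_open_cube) auto
  moreover have "L j p - L j q \<noteq> 0" using assms(3) by (auto simp: sign_change_def)
  then have "L j (p + seg_kink p q j *\<^sub>R (q - p)) = 0"
    unfolding L_segment seg_kink_def by (simp add: field_simps)
  ultimately show ?thesis by (auto simp: crosses_cube_def)
qed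

lemma sign_change_same_hyperplane:
  assumes "same_hyperplane j k" "j \<in> sign_change p q" "k < N"
  shows "k \<in> sign_change p q \<and> seg_kink p q k = seg_kink p q j"
proof -
  have neg: "(- x) / (- x - - y) = x / (x - y)" for x y :: real
  proof -
    have "- x - - y = - (x - y)" by simp
    then show ?thesis by (simp only: minus_divide_divide)
  qed
  from same_hyperplane_L[OF assms(1)]
  have "L k p * L k q = L j p * L j q \<and> L k p / (L k p - L k q) = L j p / (L j p - L j q)"
    using neg by auto
  then show ?thesis using assms(2,3) by (simp add: sign_change_def seg_kink_def)
qed

lemma sum_kink_group_by_class:
  assumes pq: "p \<in> open_cube B" "q \<in> open_cube B"
  shows "(\<Sum>j\<in>{j\<in>sign_change p q. seg_kink p q j = z}. f j) =
           (\<Sum>r\<in>{r\<in>class_reps \<inter> sign_change p q. seg_kink p q r = z}. \<Sum>j\<in>hyperplane_class r. f j)"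
proof -
  define S where "S = {j\<in>sign_change p q. seg_kink p q j = z}"
  define T where "T = {r\<in>class_reps \<inter> sign_change p q. seg_kink p q r = z}"
  have S_N: "j < N" if "j \<in> S" for j using that by (simp add: S_def sign_change_def)
  have img: "class_rep ` S \<subseteq> T"
  proof
    fix r assume "r \<in> class_rep ` S"
    then obtain j where j: "j \<in> S" "r = class_rep j" by blast
    then have "j \<in> sign_change p q" "seg_kink p q j = z" by (auto simp: S_def)
    moreover have "class_rep j \<in> class_reps"
      using class_rep_in_class_reps[OF S_N[OF j(1)] crosses_cube_if_sign_change[OF pq]] j(1)
      by (simp add: S_def)
    ultimately show "r \<in> T"
      using sign_change_same_hyperplane[OF same_hyperplane_class_rep] class_reps_subset j(2)
      by (auto simp: T_def)
  qed
  have group: "{j\<in>S. class_rep j = r} = hyperplane_class r" if r: "r \<in> T" for r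
  proof (intro set_eqI iffI)
    fix j assume "j \<in> {j\<in>S. class_rep j = r}"
    then show "j \<in> hyperplane_class r"
      using same_hyperplane_class_rep[of j] S_N
      by (auto simp: hyperplane_class_def intro: same_hyperplane_sym)
  next
    fix j assume "j \<in> hyperplane_class r"
    then have j: "same_hyperplane r j" "j < N" by (auto simp: hyperplane_class_def)
    have "r \<in> class_reps" "r \<in> sign_change p q" "seg_kink p q r = z" using r by (auto simp: T_def)
    then show "j \<in> {j\<in>S. class_rep j = r}"
      using sign_change_same_hyperplane[OF j(1) _ j(2)] class_rep_eq[OF j(1)] class_rep_of_class_reps
      by (auto simp: S_def)
  qed
  show ?thesis
    using sum.group[of S T class_rep f] img group finite_class_reps
    by (simp add: S_def T_def sign_change_def)
qed

lemma tendsto_seg_group_sum: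
  assumes pq: "p \<in> open_cube B" "q \<in> open_cube B"
  shows "(\<lambda>n. \<Sum>j\<in>{j\<in>sign_change p q. seg_kink p q j = z}. seg_weight p q n j) \<longlonglongrightarrow>
           (\<Sum>r\<in>{r\<in>class_reps \<inter> sign_change p q. seg_kink p q r = z}.
              kink_coeff * (class_weight r * \<bar>U r \<bullet> (q - p)\<bar>))"
proof -
  have "(\<lambda>n. \<Sum>j\<in>hyperplane_class r. seg_weight p q n j) \<longlonglongrightarrow>
          kink_coeff * (class_weight r * \<bar>U r \<bullet> (q - p)\<bar>)"
    if "r \<in> class_reps \<inter> sign_change p q" for r
  proof -
    have r: "r < N" "crosses_cube r" "r \<in> sign_change p q"
      using that by (auto simp: class_reps_def)
    have "(\<lambda>n. kink_coeff * (\<Sum>j\<in>hyperplane_class r. c n j * \<bar>pu n j \<bullet> (q - p)\<bar>)) \<longlonglongrightarrow>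
            kink_coeff * (class_weight r * \<bar>U r \<bullet> (q - p)\<bar>)"
      by (intro tendsto_mult_left tendsto_class_sum r(1,2) sign_change_inner_ne_0 r(3))
    then show ?thesis by (simp add: seg_weight_def sum_distrib_left mult.assoc)
  qed
  then show ?thesis unfolding sum_kink_group_by_class[OF pq] by (auto intro: tendsto_sum)
qed

definition relu_part :: "real ^ 'd \<Rightarrow> real" where
  "relu_part x = kink_coeff * (\<Sum>r\<in>class_reps. class_weight r * relu (L r x))"

lemma relu_part_on_segment:
  assumes "0 \<le> t" "t \<le> 1"
  shows "relu_part (p + t *\<^sub>R (q - p)) =
           (\<Sum>r\<in>class_reps \<inter> sign_change p q. kink_coeff * (class_weight r * \<bar>U r \<bullet> (q - p)\<bar>) * relu (t - seg_kink p q r))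
           + kink_coeff * (\<Sum>r\<in>class_reps. class_weight r * relu_chord (L r p) (L r q) t)"
proof -
  have "relu (L r (p + t *\<^sub>R (q - p))) =
          (if r \<in> sign_change p q then \<bar>U r \<bullet> (q - p)\<bar> * relu (t - seg_kink p q r) else 0)
          + relu_chord (L r p) (L r q) t" if "r \<in> class_reps" for r
  proof -
    have "\<bar>L r q - L r p\<bar> = \<bar>U r \<bullet> (q - p)\<bar>" by (simp add: L_def inner_diff_right)
    then show ?thesis
      using relu_eq_kink_plus_chord[OF assms, of "L r p" "L r q"] that class_reps_subset
      by (auto simp: L_segment sign_change_def seg_kink_def)
  qed
  then have "relu_part (p + t *\<^sub>R (q - p)) =
      kink_coeff * (\<Sum>r\<in>class_reps. class_weight r *
        (if r \<in> sign_change p q then \<bar>U r \<bullet> (q - p)\<bar> * relu (t - seg_kink p q r) else 0))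
      + kink_coeff * (\<Sum>r\<in>class_reps. class_weight r * relu_chord (L r p) (L r q) t)"
    by (simp add: relu_part_def distrib_left sum.distrib)
  also have "(\<Sum>r\<in>class_reps. class_weight r *
        (if r \<in> sign_change p q then \<bar>U r \<bullet> (q - p)\<bar> * relu (t - seg_kink p q r) else 0)) =
      (\<Sum>r\<in>class_reps \<inter> sign_change p q. class_weight r * (\<bar>U r \<bullet> (q - p)\<bar> * relu (t - seg_kink p q r)))"
    by (simp add: sum.inter_restrict[OF finite_class_reps] if_distrib cong: if_cong)
  finally show ?thesis by (simp add: sum_distrib_left mult.assoc)
qed

lemma residual_affine_on_generic_segment:
  assumes pq: "p \<in> open_cube B" "q \<in> open_cube B"
    and nonzero: "\<And>k. k < N \<Longrightarrow> L k p \<noteq> 0 \<and> L k q \<noteq> 0" and s: "0 \<le> s" "s \<le> 1"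
  defines "h \<equiv> \<lambda>x. g x - relu_part x"
  shows "h (p + s *\<^sub>R (q - p)) = (1 - s) * h p + s * h q"
proof -
  obtain X Y where "kinked_limit (sign_change p q) (seg_weight p q) (seg_kink_seq p q) (seg_kink p q)
      (\<lambda>n s. F n (p + s *\<^sub>R (q - p))) (\<lambda>s. g (p + s *\<^sub>R (q - p))) X Y"
    using kinked_limit_on_segment[OF _ _ nonzero] pq open_cube_subset_cube by blast
  then interpret K: kinked_limit "sign_change p q" "seg_weight p q" "seg_kink_seq p q" "seg_kink p q"
      "\<lambda>n s. F n (p + s *\<^sub>R (q - p))" "\<lambda>s. g (p + s *\<^sub>R (q - p))" X Y .
  define \<kappa> where "\<kappa> r = kink_coeff * (class_weight r * \<bar>U r \<bullet> (q - p)\<bar>)" for r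
  define T where "T = class_reps \<inter> sign_change p q"
  \<comment> \<open>The kink weights of g along the segment are exactly those of relu_part.\<close>
  have weight: "K.kink_weight z = (\<Sum>r\<in>{r\<in>T. seg_kink p q r = z}. \<kappa> r)" for z
    using LIMSEQ_unique[OF K.tendsto_kink_weight(1) tendsto_seg_group_sum[OF pq]]
    by (simp add: \<kappa>_def T_def)
  have "(\<Sum>z\<in>seg_kink p q ` sign_change p q. K.kink_weight z * relu (t - z)) =
          (\<Sum>r\<in>T. \<kappa> r * relu (t - seg_kink p q r))" for t
  proof -
    have T: "finite T" using finite_class_reps by (simp add: T_def)
    have kinks: "finite (seg_kink p q ` sign_change p q)" by (simp add: sign_change_def)
    have img: "seg_kink p q ` T \<subseteq> seg_kink p q ` sign_change p q" by (auto simp: T_def)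
    have "K.kink_weight z * relu (t - z) = (\<Sum>r\<in>{r\<in>T. seg_kink p q r = z}. \<kappa> r * relu (t - seg_kink p q r))"
      for z unfolding weight sum_distrib_right by (rule sum.cong) auto
    then have "(\<Sum>z\<in>seg_kink p q ` sign_change p q. K.kink_weight z * relu (t - z)) =
        (\<Sum>z\<in>seg_kink p q ` sign_change p q. \<Sum>r\<in>{r\<in>T. seg_kink p q r = z}. \<kappa> r * relu (t - seg_kink p q r))"
      by (rule sum.cong[OF refl])
    also have "\<dots> = (\<Sum>r\<in>T. \<kappa> r * relu (t - seg_kink p q r))" by (rule sum.group[OF T kinks img])
    finally show ?thesis .
  qed
  then obtain A0 B0 where g_seg: "\<And>t. t \<in> {0..1} \<Longrightarrow>
      g (p + t *\<^sub>R (q - p)) = A0 + B0 * t + (\<Sum>r\<in>T. \<kappa> r * relu (t - seg_kink p q r))"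
    using K.kinked_limit_representation by auto
  define C where "C t = kink_coeff * (\<Sum>r\<in>class_reps. class_weight r * relu_chord (L r p) (L r q) t)" for t
  have C_s: "C s = (1 - s) * C 0 + s * C 1"
    unfolding C_def relu_chord_affine[of _ _ s]
    by (simp add: sum.distrib sum_subtractf sum_distrib_left algebra_simps)
  have h_seg: "h (p + t *\<^sub>R (q - p)) = A0 + B0 * t - C t" if "t \<in> {0..1}" for t
    using g_seg[OF that] relu_part_on_segment[of t p q] that by (simp add: h_def C_def \<kappa>_def T_def)
  have hs: "h (p + s *\<^sub>R (q - p)) = A0 + B0 * s - C s" using h_seg s by simp
  have hp: "h p = A0 - C 0" and hq: "h q = A0 + B0 - C 1" using h_seg[of 0] h_seg[of 1] by simp_all
  show ?thesis unfolding hs hp hq C_s by (simp add: algebra_simps)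
qed

lemma residual_segment_affine_on_cube: "segment_affine_on (cube B) (\<lambda>x. g x - relu_part x)"
proof -
  define h where "h x = g x - relu_part x" for x
  define G where "G = {y\<in>open_cube B. \<forall>k<N. L k y \<noteq> 0}"
  have cont: "continuous_on (cube B) h"
    unfolding h_def relu_part_def L_def by (intro continuous_intros continuous_g)
  have seg_in: "fst z + s *\<^sub>R (snd z - fst z) \<in> cube B" if "z \<in> cube B \<times> cube B" "0 \<le> s" "s \<le> 1" for z s
    using that by (intro convex_add_scaleR_diff convex_cube) auto
  \<comment> \<open>The segment identity holds for generic endpoints and extends to the cube by continuity.\<close>
  have "h (fst z + s *\<^sub>R (snd z - fst z)) - ((1 - s) * h (fst z) + s * h (snd z)) = 0"
    if z: "z \<in> cube B \<times> cube B" and s: "0 \<le> s" "s \<le> 1" for z s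
  proof (rule continuous_constant_on_closure[where S = "G \<times> G"])
    have "continuous_on (cube B \<times> cube B) (\<lambda>z. h (fst z + s *\<^sub>R (snd z - fst z)))"
      using seg_in s by (intro continuous_on_compose2[OF cont] continuous_intros) auto
    moreover have "continuous_on (cube B \<times> cube B) (\<lambda>z. h (fst z))"
      by (intro continuous_on_compose2[OF cont] continuous_intros) auto
    moreover have "continuous_on (cube B \<times> cube B) (\<lambda>z. h (snd z))"
      by (intro continuous_on_compose2[OF cont] continuous_intros) auto
    ultimately show "continuous_on (closure (G \<times> G))
        (\<lambda>z. h (fst z + s *\<^sub>R (snd z - fst z)) - ((1 - s) * h (fst z) + s * h (snd z)))"
      unfolding closure_Times G_def closure_generic_points by (intro continuous_intros)
    show "h (fst z + s *\<^sub>R (snd z - fst z)) - ((1 - s) * h (fst z) + s * h (snd z)) = 0" if "z \<in> G \<times> G" for z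
      using residual_affine_on_generic_segment[of "fst z" "snd z" s] that s by (auto simp: G_def h_def)
    show "z \<in> closure (G \<times> G)" using z unfolding closure_Times G_def closure_generic_points .
  qed
  then show ?thesis by (auto simp: segment_affine_on_def h_def)
qed

lemma limit_eq_affine_plus_relu_part: "\<exists>w b. \<forall>x\<in>cube B. g x = w \<bullet> x + b + relu_part x"
  using segment_affine_on_cube_imp_affine[OF B_pos residual_segment_affine_on_cube]
  by (metis add.commute diff_eq_eq)

lemma hyperplane_class_singleton:
  assumes "class_reps = {..<N}" "j < N"
  shows "hyperplane_class j = {j}"
proof -
  have "k = j" if "k < N" "same_hyperplane j k" for k
    using that assms same_hyperplane_sym[OF that(2)]
    by (cases k j rule: linorder_cases) (auto simp: class_reps_def)
  then show ?thesis using assms(2) by (auto simp: hyperplane_class_def same_hyperplane_refl)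
qed

lemma tendsto_outer_weight:
  assumes "class_reps = {..<N}" "j < N"
  shows "(\<lambda>n. c n j) \<longlonglongrightarrow> class_weight j"
proof -
  have j: "j < N" "crosses_cube j" using assms by (auto simp: class_reps_def)
  have UU: "\<bar>U j \<bullet> U j\<bar> \<noteq> 0" using U_nonzero_if_crosses_cube[OF j] by simp
  have "(\<lambda>n. c n j * \<bar>pu n j \<bullet> U j\<bar>) \<longlonglongrightarrow> class_weight j * \<bar>U j \<bullet> U j\<bar>"
    using tendsto_class_sum[OF j, of "U j"] UU by (simp add: hyperplane_class_singleton[OF assms])
  moreover have inner: "(\<lambda>n. \<bar>pu n j \<bullet> U j\<bar>) \<longlonglongrightarrow> \<bar>U j \<bullet> U j\<bar>"
    by (intro tendsto_intros pu_tendsto j)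
  ultimately have "(\<lambda>n. c n j * \<bar>pu n j \<bullet> U j\<bar> / \<bar>pu n j \<bullet> U j\<bar>) \<longlonglongrightarrow> class_weight j"
    using UU by (auto dest: tendsto_divide)
  moreover have "\<forall>\<^sub>F n in sequentially. c n j * \<bar>pu n j \<bullet> U j\<bar> / \<bar>pu n j \<bullet> U j\<bar> = c n j"
    using tendsto_imp_eventually_ne[OF inner UU] by eventually_elim simp
  ultimately show ?thesis by (rule Lim_transform_eventually)
qed

lemma limit_in_RNN_shallow_if_all_reps:
  assumes all: "class_reps = {..<N}"
  shows "g \<in> RNN_shallow a N B"
proof -
  define net where "net x = (\<Sum>j<N. class_weight j * pReLU a (U j \<bullet> x + V j))" for x
  have net: "(\<lambda>n. \<Sum>j<N. c n j * pReLU a (pu n j \<bullet> x + pv n j)) \<longlonglongrightarrow> net x" for x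
    unfolding net_def by (intro tendsto_intros tendsto_outer_weight[OF all] pu_tendsto pv_tendsto) auto
  have "(\<lambda>n. ((\<Sum>j<N. c n j * pReLU a (pu n j \<bullet> x + pv n j)) + e n) -
              (\<Sum>j<N. c n j * pReLU a (pu n j \<bullet> x + pv n j))) \<longlonglongrightarrow> g x - net x"
    if "x \<in> cube B" for x
    by (intro tendsto_diff tendsto_network that net)
  then have e: "e \<longlonglongrightarrow> g x - net x" if "x \<in> cube B" for x using that by simp
  have "g x = net x + (g 0 - net 0)" if "x \<in> cube B" for x
    using LIMSEQ_unique[OF e[OF that] e[OF zero_in_cube]] B_pos by simp
  then show ?thesis unfolding RNN_shallow_def net_def by blast
qed

lemma limit_in_RNN_shallow_if_spare_neuron:
  assumes "class_reps \<noteq> {..<N}"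
  shows "g \<in> RNN_shallow a N B"
proof -
  obtain j0 where j0: "j0 < N" "j0 \<notin> class_reps" using assms class_reps_subset by blast
  obtain w b where wb: "\<forall>x\<in>cube B. g x = w \<bullet> x + b + relu_part x"
    using limit_eq_affine_plus_relu_part by blast
  define w' where "w' = w - lin_coeff *\<^sub>R (\<Sum>r\<in>class_reps. class_weight r *\<^sub>R U r)"
  define b' where "b' = b - lin_coeff * (\<Sum>r\<in>class_reps. class_weight r * V r)"
  \<comment> \<open>Trade each relu for a pReLU minus its linear part.\<close>
  have "relu_part x = (\<Sum>r\<in>class_reps. class_weight r * pReLU a (U r \<bullet> x + V r))
                      - lin_coeff * ((\<Sum>r\<in>class_reps. class_weight r *\<^sub>R U r) \<bullet> x + (\<Sum>r\<in>class_reps. class_weight r * V r))" for x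
    by (simp add: relu_part_def pReLU_eq L_def inner_sum_left sum_distrib_left sum.distrib
        sum_subtractf[symmetric] algebra_simps)
  then have "\<forall>x\<in>cube B. g x = (\<Sum>r\<in>class_reps. class_weight r * pReLU a (U r \<bullet> x + V r)) + w' \<bullet> x + b'"
    using wb by (simp add: w'_def b'_def inner_diff_left algebra_simps)
  then show ?thesis
    using RNN_shallow_of_partial_network_plus_affine[OF a_nonneg class_reps_subset j0] by blast
qed

lemma limit_in_RNN_shallow: "g \<in> RNN_shallow a N B"
  using limit_in_RNN_shallow_if_all_reps limit_in_RNN_shallow_if_spare_neuron by blast

end

lemma continuous_on_RNN_shallow:
  fixes f :: "real ^ 'd \<Rightarrow> real"
  assumes "f \<in> RNN_shallow a N0 B"
  shows "continuous_on (cube B) f"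
proof -
  obtain A1 b1 A2 e where f: "\<forall>x\<in>cube B. f x = (\<Sum>j<N0. A2 j * pReLU a (A1 j \<bullet> x + b1 j)) + e"
    using assms by (auto simp: RNN_shallow_def)
  have "continuous_on (cube B) (\<lambda>x. (\<Sum>j<N0. A2 j * pReLU a (A1 j \<bullet> x + b1 j)) + e)"
    by (intro continuous_intros)
  then show ?thesis using f by (auto intro: continuous_on_eq)
qed

lemma RNN_shallow_unit_representation:
  fixes f :: "real ^ 'd \<Rightarrow> real"
  assumes "f \<in> RNN_shallow a N0 B"
  shows "\<exists>c u v e. (\<forall>j. norm (u j, v j) = 1) \<and>
           (\<forall>x\<in>cube B. f x = (\<Sum>j<N0. c j * pReLU a (u j \<bullet> x + v j)) + e)"
proof -
  obtain A1 b1 A2 e where f: "\<forall>x\<in>cube B. f x = (\<Sum>j<N0. A2 j * pReLU a (A1 j \<bullet> x + b1 j)) + e"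
    using assms by (auto simp: RNN_shallow_def)
  have "\<forall>j. \<exists>u v c. norm (u, v) = 1 \<and> (\<forall>x. A2 j * pReLU a (A1 j \<bullet> x + b1 j) = c * pReLU a (u \<bullet> x + v))"
    using neuron_unit_normalization by blast
  then obtain u v c where "\<forall>j. norm (u j, v j) = 1 \<and>
      (\<forall>x. A2 j * pReLU a (A1 j \<bullet> x + b1 j) = c j * pReLU a (u j \<bullet> x + v j))"
    by (auto simp only: choice_iff)
  then show ?thesis using f by (intro exI[of _ c] exI[of _ u] exI[of _ v] exI[of _ e]) simp
qed

lemma pointwise_limit_in_RNN_shallow_width_0:
  fixes f :: "nat \<Rightarrow> real ^ 'd \<Rightarrow> real"
  assumes "B \<ge> 0" "\<forall>n. f n \<in> RNN_shallow a 0 B" "\<And>x. x \<in> cube B \<Longrightarrow> (\<lambda>n. f n x) \<longlonglongrightarrow> g x"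
  shows "g \<in> RNN_shallow a 0 B"
proof -
  have "\<forall>n. \<exists>b. \<forall>x\<in>cube B. f n x = b" using assms(2) by (simp add: RNN_shallow_def)
  then obtain b where b: "\<And>n x. x \<in> cube B \<Longrightarrow> f n x = b n" by metis
  have "b \<longlonglongrightarrow> g x" if "x \<in> cube B" for x using assms(3)[OF that] b[OF that] by simp
  then have "g x = g 0" if "x \<in> cube B" for x
    using that zero_in_cube[OF assms(1)] LIMSEQ_unique by blast
  then show ?thesis by (auto simp: RNN_shallow_def)
qed

lemma segment_affine_on_RNN_shallow_1:
  fixes f :: "real ^ 'd \<Rightarrow> real"
  assumes "f \<in> RNN_shallow 1 N0 B"
  shows "segment_affine_on (cube B) f"
proof -
  obtain A1 b1 A2 e where f: "\<forall>x\<in>cube B. f x = (\<Sum>j<N0. A2 j * (A1 j \<bullet> x + b1 j)) + e"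
    using assms by (auto simp: RNN_shallow_def)
  show ?thesis unfolding segment_affine_on_def
  proof (intro ballI allI impI)
    fix p q :: "real ^ 'd" and s :: real assume pq: "p \<in> cube B" "q \<in> cube B" and s: "0 \<le> s \<and> s \<le> 1"
    have "p + s *\<^sub>R (q - p) \<in> cube B" using pq s by (intro convex_add_scaleR_diff convex_cube) auto
    then show "f (p + s *\<^sub>R (q - p)) = (1 - s) * f p + s * f q"
      using f pq by (simp add: inner_add_right inner_diff_right sum.distrib sum_distrib_left
          sum_subtractf algebra_simps)
  qed
qed

lemma pointwise_limit_in_RNN_shallow_1:
  fixes f :: "nat \<Rightarrow> real ^ 'd \<Rightarrow> real"
  assumes B: "B > 0" and N0: "N0 > 0"
    and f: "\<forall>n. f n \<in> RNN_shallow 1 N0 B" and lim: "\<And>x. x \<in> cube B \<Longrightarrow> (\<lambda>n. f n x) \<longlonglongrightarrow> g x"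
  shows "g \<in> RNN_shallow 1 N0 B"
proof -
  have "segment_affine_on (cube B) g"
    using f segment_affine_on_RNN_shallow_1 by (intro segment_affine_on_tendsto[OF convex_cube _ lim]) blast+
  then obtain w b where "\<forall>x\<in>cube B. g x = w \<bullet> x + b"
    using segment_affine_on_cube_imp_affine[OF B] by blast
  then show ?thesis
    using N0 by (intro RNN_shallow_of_partial_network_plus_affine[where R = "{}" and k = 0 and w = w and b = b])
      auto
qed

lemma pointwise_limit_in_RNN_shallow:
  fixes f :: "nat \<Rightarrow> real ^ 'd \<Rightarrow> real"
  assumes B: "B > 0" and a: "a \<ge> 0" "a \<noteq> 1"
    and f: "\<forall>n. f n \<in> RNN_shallow a N0 B" and lim: "\<And>x. x \<in> cube B \<Longrightarrow> (\<lambda>n. f n x) \<longlonglongrightarrow> g x"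
    and g: "continuous_on (cube B) g"
  shows "g \<in> RNN_shallow a N0 B"
proof -
  have "\<forall>n. \<exists>c u v e. (\<forall>j. norm (u j, v j) = 1) \<and>
           (\<forall>x\<in>cube B. f n x = (\<Sum>j<N0. c j * pReLU a (u j \<bullet> x + v j)) + e)"
    using f RNN_shallow_unit_representation by blast
  then have "\<exists>c pu pv e. \<forall>n. (\<forall>j. norm (pu n j, pv n j) = 1) \<and>
           (\<forall>x\<in>cube B. f n x = (\<Sum>j<N0. c n j * pReLU a (pu n j \<bullet> x + pv n j)) + e n)"
    by (simp only: choice_iff)
  then obtain c pu pv e where unit: "\<And>n j. norm (pu n j, pv n j) = 1"
    and f_eq: "\<And>n x. x \<in> cube B \<Longrightarrow> f n x = (\<Sum>j<N0. c n j * pReLU a (pu n j \<bullet> x + pv n j)) + e n"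
    by blast
  \<comment> \<open>The normalized inner weights lie on the unit sphere, so a subsequence converges.\<close>
  have "\<forall>j<N0. bounded (range (\<lambda>n. (pu n j, pv n j)))"
    using unit by (auto simp: bounded_iff intro!: exI[of _ 1])
  from bounded_imp_convergent_subsequence_finite[OF this]
  obtain \<sigma> l where \<sigma>: "strict_mono \<sigma>" and l: "\<forall>j<N0. (\<lambda>n. (pu (\<sigma> n) j, pv (\<sigma> n) j)) \<longlonglongrightarrow> l j"
    by blast
  have "norm (fst (l j)) ^ 2 + snd (l j) ^ 2 = 1" if "j < N0" for j
  proof -
    have "(\<lambda>n. norm (pu (\<sigma> n) j, pv (\<sigma> n) j)) \<longlonglongrightarrow> norm (l j)"
      using l that by (intro tendsto_norm) auto
    then have "norm (l j) = 1" using unit LIMSEQ_unique[OF _ tendsto_const] by simp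
    then show ?thesis by (simp add: norm_prod_def)
  qed
  moreover have "(\<lambda>n. (\<Sum>j<N0. c (\<sigma> n) j * pReLU a (pu (\<sigma> n) j \<bullet> x + pv (\<sigma> n) j)) + e (\<sigma> n)) \<longlonglongrightarrow> g x"
    if "x \<in> cube B" for x
    using LIMSEQ_subseq_LIMSEQ[OF lim[OF that] \<sigma>] that by (simp add: comp_def f_eq)
  moreover have "(\<lambda>n. pu (\<sigma> n) j) \<longlonglongrightarrow> fst (l j)" "(\<lambda>n. pv (\<sigma> n) j) \<longlonglongrightarrow> snd (l j)"
    if "j < N0" for j
    using tendsto_fst[OF l[rule_format, OF that]] tendsto_snd[OF l[rule_format, OF that]] by simp_all
  ultimately interpret prelu_limit a B N0 "\<lambda>n. c (\<sigma> n)" "\<lambda>n. pu (\<sigma> n)" "\<lambda>n. pv (\<sigma> n)" "\<lambda>n. e (\<sigma> n)"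
      g "\<lambda>j. fst (l j)" "\<lambda>j. snd (l j)"
    using B a g by unfold_locales auto
  show ?thesis by (rule limit_in_RNN_shallow)
qed

theorem theorem3p8:
  fixes a B :: real and N0 :: nat
    and f :: "nat \<Rightarrow> real ^ 'd \<Rightarrow> real" and g :: "real ^ 'd \<Rightarrow> real"
  assumes "B > 0" and "a \<ge> 0"
    and "\<forall>n. f n \<in> RNN_shallow a N0 B"
    and "uniform_limit (cube B) f g sequentially"
  shows "g \<in> RNN_shallow a N0 B"
proof -
  have lim: "(\<lambda>n. f n x) \<longlonglongrightarrow> g x" if "x \<in> cube B" for x
    using tendsto_uniform_limitI[OF assms(4) that] .
  have "\<forall>\<^sub>F n in sequentially. continuous_on (cube B) (f n)"
    using assms(3) continuous_on_RNN_shallow by (intro always_eventually) blast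
  from uniform_limit_theorem[OF this assms(4)] have "continuous_on (cube B) g" by simp
  consider "N0 = 0" | "a = 1" "N0 > 0" | "a \<noteq> 1" by blast
  then show ?thesis
  proof cases
    case 1
    show ?thesis unfolding 1
      by (rule pointwise_limit_in_RNN_shallow_width_0[of B f]) (use assms(1,3) lim 1 in auto)
  next
    case 2
    show ?thesis unfolding 2(1)
      by (rule pointwise_limit_in_RNN_shallow_1[of B N0 f]) (use assms(1,3) lim 2 in auto)
  next
    case 3
    then show ?thesis
      using assms(1-3) lim \<open>continuous_on (cube B) g\<close> by (intro pointwise_limit_in_RNN_shallow)
  qed
qed

end
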